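(* Let $\mathbb{T}^2=[-\pi,\pi]^2$ and let $f_0,g_0$ be smooth $2\pi$-periodic functions of $y$. Then there exist constants $C_0,C_1,C_2>0$ and $\beta_1,\beta_2,\beta_3>0$ depending only on $f_0,g_0$, and a function $U(t,y)$, smooth in $y$, with $\|U\|_{L^\infty}\le 1$ and $\|U(t,\cdot)\|_{H^1_y}\le C_0e^{\beta_1\lceil t\rceil^2}$, such that the solution $\rho$ of \[ \partial_t\rho+U(t,y)\partial_x\rho=0,\qquad \rho(0,x,y)=f_0(y)\sin x+g_0(y)\cos x, \] satisfies $\|\rho(t,\cdot)\|_{H^{-1}}\le C_1e^{-\beta_2 t}$ and $\|\rho(t,\cdot)\|_{H^1}\le C_2e^{\beta_3\lceil t\rceil^2}$ for all $t\ge0$.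
   Context: $\lceil\cdot\rceil$ is the ceiling function. $\|f\|_{H^1}^2=\|f\|_{L^2}^2+\|\nabla f\|_{L^2}^2$ on $\mathbb{T}^2$; for mean-zero $f$, $\|f\|_{H^{-1}}^2=\sum_{\xi\in\mathbb{Z}^2\setminus\{0\}}|\xi|^{-2}|\hat f(\xi)|^2$. *)

theory Defs
  imports "HOL-Analysis.Analysis"
begin

definition smooth_fun :: "(real \<Rightarrow> real) \<Rightarrow> bool" where
  "smooth_fun f \<longleftrightarrow> (\<forall>n x. ((deriv ^^ n) f) differentiable (at x))"

definition periodic_2pi :: "(real \<Rightarrow> real) \<Rightarrow> bool" where
  "periodic_2pi f \<longleftrightarrow> (\<forall>y. f (y + 2 * pi) = f y)"

text \<open>The torus T^2 = [-pi,pi]^2, as a fundamental domain in R^2.\<close>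
definition torus_box :: "(real \<times> real) set" where
  "torus_box = {-pi..pi} \<times> {-pi..pi}"

definition H1_circle_sq :: "(real \<Rightarrow> real) \<Rightarrow> ennreal" where
  "H1_circle_sq u = (\<integral>\<^sup>+ y\<in>{-pi..pi}. ennreal ((u y)\<^sup>2 + (deriv u y)\<^sup>2) \<partial>lborel)"

definition H1_torus_sq :: "(real \<Rightarrow> real \<Rightarrow> real) \<Rightarrow> ennreal" where
  "H1_torus_sq f = (\<integral>\<^sup>+ p\<in>torus_box.
      ennreal ((f (fst p) (snd p))\<^sup>2
             + (deriv (\<lambda>x. f x (snd p)) (fst p))\<^sup>2
             + (deriv (\<lambda>y. f (fst p) y) (snd p))\<^sup>2) \<partial>lborel)"

definition fourier_coeff :: "(real \<Rightarrow> real \<Rightarrow> real) \<Rightarrow> int \<times> int \<Rightarrow> complex" where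
  "fourier_coeff f \<xi> = (1 / (4 * pi\<^sup>2)) *\<^sub>R
     set_lebesgue_integral lborel torus_box
       (\<lambda>p. complex_of_real (f (fst p) (snd p))
             * cis (- (of_int (fst \<xi>) * fst p + of_int (snd \<xi>) * snd p)))"

text \<open>Squared H^{-1} norm (for mean-zero f): sum over xi in Z^2 \ {0} of
  |xi|^{-2} |hat f(xi)|^2.\<close>
definition Hm1_torus_sq :: "(real \<Rightarrow> real \<Rightarrow> real) \<Rightarrow> ennreal" where
  "Hm1_torus_sq f = (\<integral>\<^sup>+ \<xi>. ennreal ((cmod (fourier_coeff f \<xi>))\<^sup>2
        / ((of_int (fst \<xi>))\<^sup>2 + (of_int (snd \<xi>))\<^sup>2)) \<partial>count_space (UNIV - {(0,0)}))"

text \<open>Solution of the shear transport equation rho_t + U(t,y) rho_x = 0,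
  rho(0) = rho0, given by characteristics:
  rho(t,x,y) = rho0(x - int_0^t U(s,y) ds, y).\<close>
definition transport_sol ::
  "(real \<Rightarrow> real \<Rightarrow> real) \<Rightarrow> (real \<Rightarrow> real \<Rightarrow> real) \<Rightarrow> real \<Rightarrow> real \<Rightarrow> real \<Rightarrow> real" where
  "transport_sol U rho0 t x y = rho0 (x - set_lebesgue_integral lborel {0..t} (\<lambda>s. U s y)) y"

end

theory Submission
  imports Defs
begin

text \<open>
  The velocity is one shear mode at a time: U(t, y) = sin (N_k y) for t in (k - 1, k], where
  N_k = S_k 2^k and S_k = 1 + (sum of the N_n for n < k). The solution is
  f0(y) sin (x - Phi) + g0(y) cos (x - Phi), with Phi(t, y) the time integral of U, so only the
  horizontal frequencies 1 and -1 occur; after an integration by parts in y and Bessel's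
  inequality, its H^-1 norm is bounded by the antiderivatives in y of the two profiles
  (g0 -+ i f0) exp (-+ i Phi).

  Multiplying a Lipschitz function by exp (i c sin (N y)), N even, shrinks the supremum of its
  antiderivative by the factor 1 - 11 c^2 / 48 up to an error O(Lip / N): over each period the
  phase factor averages to a real number of at most that size. The Lipschitz constant of
  exp (i Phi(k, -)) is at most S_(k+1), whereas N_(k+1) = S_(k+1) 2^(k+1); hence the errors are
  summable and the antiderivatives decay like (4/5)^t. Meanwhile the y-derivative of Phi, and with
  it every H^1 norm, grows at most like S_(ceil t + 1) <= exp ((ceil t + 1)^2).
\<close>

section \<open>Smooth functions of one variable\<close>

lemma smooth_fun_has_real_derivative:
  assumes "smooth_fun f"
  shows "(f has_real_derivative deriv f x) (at x)"
  using assms funpow_0[of deriv f] unfolding smooth_fun_def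
  by (metis DERIV_deriv_iff_real_differentiable)

lemma smooth_fun_deriv_has_real_derivative:
  assumes "smooth_fun f"
  shows "(deriv f has_real_derivative deriv (deriv f) x) (at x)"
  using assms unfolding smooth_fun_def
  by (metis DERIV_deriv_iff_real_differentiable funpow_0 funpow_Suc_right o_apply)

lemma smooth_fun_continuous_on:
  assumes "smooth_fun f"
  shows "continuous_on S f" "continuous_on S (deriv f)"
  using smooth_fun_has_real_derivative[OF assms] smooth_fun_deriv_has_real_derivative[OF assms]
  by (auto intro!: continuous_at_imp_continuous_on DERIV_isCont)

lemma smooth_fun_bounded:
  assumes "smooth_fun f"
  obtains M where "\<And>y. y \<in> {a..b} \<Longrightarrow> \<bar>f y\<bar> \<le> M \<and> \<bar>deriv f y\<bar> \<le> M"
proof -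
  have "bounded (f ` {a..b} \<union> deriv f ` {a..b})"
    using smooth_fun_continuous_on[OF assms] unfolding bounded_Un
    by (intro conjI compact_imp_bounded compact_continuous_image) auto
  then show ?thesis
    using that unfolding bounded_iff by fastforce
qed

lemma smooth_funs_bounded:
  assumes "smooth_fun f" "smooth_fun g"
  obtains M where "0 < M"
    "\<And>y. y \<in> {a..b} \<Longrightarrow> \<bar>f y\<bar> \<le> M \<and> \<bar>g y\<bar> \<le> M \<and> \<bar>deriv f y\<bar> \<le> M \<and> \<bar>deriv g y\<bar> \<le> M"
proof -
  obtain Mf where Mf: "\<And>y. y \<in> {a..b} \<Longrightarrow> \<bar>f y\<bar> \<le> Mf \<and> \<bar>deriv f y\<bar> \<le> Mf"
    using smooth_fun_bounded[OF assms(1)] by blast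
  obtain Mg where Mg: "\<And>y. y \<in> {a..b} \<Longrightarrow> \<bar>g y\<bar> \<le> Mg \<and> \<bar>deriv g y\<bar> \<le> Mg"
    using smooth_fun_bounded[OF assms(2)] by blast
  show ?thesis
    using Mf Mg by (intro that[of "\<bar>Mf\<bar> + \<bar>Mg\<bar> + 1"]) force+
qed

lemma smooth_fun_lipschitz:
  assumes "smooth_fun f" and M: "\<And>y. y \<in> {a..b} \<Longrightarrow> \<bar>deriv f y\<bar> \<le> M"
    and "x \<in> {a..b}" "y \<in> {a..b}"
  shows "\<bar>f x - f y\<bar> \<le> M * \<bar>x - y\<bar>"
  using field_differentiable_bound[of "{a..b}" f "deriv f" M x y] assms
    smooth_fun_has_real_derivative[OF assms(1)]
  by (auto simp: has_field_derivative_at_within)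

lemma smooth_fun_sin_mult: "smooth_fun (\<lambda>y. sin (a * y))"
proof -
  have "(deriv ^^ n) (\<lambda>y. sin (a * y)) = (\<lambda>y. a ^ n * sin (a * y + real n * (pi / 2)))" for n
  proof (induction n)
    case (Suc n)
    have "((\<lambda>y. a ^ n * sin (a * y + real n * (pi / 2))) has_real_derivative
           a ^ Suc n * sin (a * y + real (Suc n) * (pi / 2))) (at y)" for y
    proof -
      have "a * y + real (Suc n) * (pi / 2) = (a * y + real n * (pi / 2)) + pi / 2"
        by (simp add: algebra_simps)
      then have "sin (a * y + real (Suc n) * (pi / 2)) = cos (a * y + real n * (pi / 2))"
        by (simp only: sin_add) simp
      then show ?thesis
        by (auto intro!: derivative_eq_intros)
    qed
    then show ?case
      unfolding funpow.simps comp_def Suc.IH by (intro ext DERIV_imp_deriv)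
  qed simp
  then show ?thesis
    unfolding smooth_fun_def
    by (auto intro!: derivative_eq_intros simp: real_differentiable_def)
qed

lemma periodic_2pi_sin_nat_mult: "periodic_2pi (\<lambda>y. sin (real n * y))"
proof -
  have "real n * (y + 2 * pi) = real n * y + 2 * real n * pi" for y
    by (simp add: algebra_simps)
  then show ?thesis
    unfolding periodic_2pi_def by (simp add: sin_add)
qed

section \<open>The shear flow and the transported wave\<close>

fun shear_freq_sum :: "nat \<Rightarrow> nat" where
  "shear_freq_sum 0 = 1"
| "shear_freq_sum (Suc k) = shear_freq_sum k * (1 + 2 ^ k)"

definition shear_freq :: "nat \<Rightarrow> nat" where
  "shear_freq k = shear_freq_sum k * 2 ^ k"

lemma shear_freq_sum_ge_1: "1 \<le> shear_freq_sum k"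
  by (induction k) auto

lemma shear_freq_pos: "0 < shear_freq k"
  using shear_freq_sum_ge_1[of k] by (simp add: shear_freq_def)

lemma even_shear_freq_Suc: "even (shear_freq (Suc k))"
  by (simp add: shear_freq_def)

lemma shear_freq_sum_eq: "shear_freq_sum k = 1 + (\<Sum>n<k. shear_freq n)"
  by (induction k) (auto simp: shear_freq_def algebra_simps)

lemma sum_shear_freq_Suc_le: "(\<Sum>n<k. real (shear_freq (Suc n))) \<le> real (shear_freq_sum (Suc k))"
proof -
  have "(\<Sum>n<k. shear_freq (Suc n)) \<le> (\<Sum>n<Suc k. shear_freq n)"
    unfolding sum.lessThan_Suc_shift by simp
  also have "\<dots> \<le> shear_freq_sum (Suc k)"
    using shear_freq_sum_eq[of "Suc k"] by linarith
  finally show ?thesis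
    by (metis of_nat_le_iff of_nat_sum)
qed

lemma shear_freq_sum_le_exp: "real (shear_freq_sum k) \<le> exp (real k ^ 2)"
proof -
  have "shear_freq_sum k \<le> 2 ^ (k * k)"
  proof (induction k)
    case (Suc k)
    have "shear_freq_sum (Suc k) = shear_freq_sum k * (1 + 2 ^ k)"
      by simp
    also have "\<dots> \<le> 2 ^ (k * k) * 2 ^ Suc k"
      using Suc by (intro mult_mono) auto
    also have "\<dots> \<le> 2 ^ (Suc k * Suc k)"
      by (auto simp: power_add[symmetric] intro!: power_increasing)
    finally show ?case .
  qed simp
  then have "real (shear_freq_sum k) \<le> 2 ^ (k * k)"
    by (metis of_nat_le_iff of_nat_numeral of_nat_power)
  also have "(2::real) ^ (k * k) \<le> exp 1 ^ (k * k)"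
    using exp_ge_add_one_self[of 1] by (intro power_mono) auto
  also have "\<dots> = exp (real k ^ 2)"
    by (simp add: exp_of_nat_mult[symmetric] power2_eq_square)
  finally show ?thesis .
qed

lemma real_shear_freq_sum_Suc_le: "real (shear_freq_sum (Suc c)) \<le> exp 2 * exp (2 * real c ^ 2)"
proof -
  have "real (Suc c) ^ 2 \<le> 2 + 2 * real c ^ 2"
    using sum_squares_bound[of "real c" 1] by (simp add: power2_eq_square algebra_simps)
  then have "exp (real (Suc c) ^ 2) \<le> exp (2 + 2 * real c ^ 2)"
    by simp
  then show ?thesis
    using shear_freq_sum_le_exp[of "Suc c"] by (simp add: exp_add)
qed

definition shear_velocity :: "real \<Rightarrow> real \<Rightarrow> real" where
  "shear_velocity t y = sin (real (shear_freq (nat \<lceil>t\<rceil>)) * y)"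

definition shear_phase :: "real \<Rightarrow> real \<Rightarrow> real" where
  "shear_phase t y = (\<Sum>n<nat \<lfloor>t\<rfloor>. sin (real (shear_freq (Suc n)) * y))
      + frac t * sin (real (shear_freq (Suc (nat \<lfloor>t\<rfloor>))) * y)"

lemma shear_velocity_measurable:
  "(\<lambda>p. shear_velocity (fst p) (snd p)) \<in> borel_measurable borel"
  unfolding shear_velocity_def borel_prod[symmetric] by measurable

lemma smooth_fun_shear_velocity: "smooth_fun (shear_velocity t)"
  unfolding shear_velocity_def[abs_def] by (rule smooth_fun_sin_mult)

lemma periodic_2pi_shear_velocity: "periodic_2pi (shear_velocity t)"
  unfolding shear_velocity_def[abs_def] by (rule periodic_2pi_sin_nat_mult)

lemma abs_shear_velocity_le: "\<bar>shear_velocity t y\<bar> \<le> 1"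
  by (simp add: shear_velocity_def)

lemma shear_phase_nat: "shear_phase (real k) y = (\<Sum>n<k. sin (real (shear_freq (Suc n)) * y))"
  by (simp add: shear_phase_def)

lemma shear_phase_add:
  assumes "0 \<le> \<theta>" "\<theta> \<le> 1"
  shows "shear_phase (real k + \<theta>) y = shear_phase (real k) y + \<theta> * sin (real (shear_freq (Suc k)) * y)"
proof (cases "\<theta> = 1")
  case True
  have "real k + 1 = real (Suc k)" by simp
  then show ?thesis
    using True by (simp only: shear_phase_nat) simp
next
  case False
  then have "\<lfloor>real k + \<theta>\<rfloor> = int k"
    using assms by (intro floor_unique) auto
  then show ?thesis
    using assms by (simp add: shear_phase_def frac_def)
qed

lemma has_integral_shear_velocity:
  assumes "0 \<le> t"
  shows "((\<lambda>s. shear_velocity s y) has_integral shear_phase t y) {0..t}"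
proof -
  have step: "((\<lambda>s. shear_velocity s y) has_integral \<theta> * sin (real (shear_freq (Suc k)) * y))
      {real k..real k + \<theta>}" if "0 \<le> \<theta>" "\<theta> \<le> 1" for k \<theta>
  proof (rule has_integral_spike_finite[of "{real k}"])
    show "shear_velocity s y = sin (real (shear_freq (Suc k)) * y)"
      if "s \<in> {real k..real k + \<theta>} - {real k}" for s
    proof -
      have "\<lceil>s\<rceil> = int k + 1"
        using that \<open>\<theta> \<le> 1\<close> by (intro ceiling_unique) auto
      then show ?thesis
        by (simp add: shear_velocity_def nat_add_distrib)
    qed
    show "((\<lambda>s. sin (real (shear_freq (Suc k)) * y)) has_integral \<theta> * sin (real (shear_freq (Suc k)) * y))
        {real k..real k + \<theta>}"
      using has_integral_const_real[of "sin (real (shear_freq (Suc k)) * y)" "real k" "real k + \<theta>"]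
        \<open>0 \<le> \<theta>\<close> by simp
  qed simp
  have nat: "((\<lambda>s. shear_velocity s y) has_integral shear_phase (real k) y) {0..real k}" for k
  proof (induction k)
    case (Suc k)
    have "((\<lambda>s. shear_velocity s y) has_integral
        shear_phase (real k) y + 1 * sin (real (shear_freq (Suc k)) * y)) {0..real k + 1}"
      by (rule has_integral_combine[OF _ _ Suc step]) auto
    then show ?case
      using shear_phase_add[of 1 k y] by (simp add: ac_simps)
  qed (simp add: shear_phase_def has_integral_refl)
  define k where "k = nat \<lfloor>t\<rfloor>"
  have t: "t = real k + frac t" "0 \<le> frac t" "frac t \<le> 1"
    using assms frac_lt_1[of t] by (auto simp: k_def frac_def)
  have "((\<lambda>s. shear_velocity s y) has_integral
      shear_phase (real k) y + frac t * sin (real (shear_freq (Suc k)) * y)) {0..real k + frac t}"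
    by (rule has_integral_combine[OF _ _ nat step]) (use t(2,3) in auto)
  then show ?thesis
    using shear_phase_add[of "frac t" k y] t by simp
qed

lemma set_integral_shear_velocity:
  assumes "0 \<le> t"
  shows "set_lebesgue_integral lborel {0..t} (\<lambda>s. shear_velocity s y) = shear_phase t y"
proof -
  have "set_integrable lborel {0..t} (\<lambda>s. shear_velocity s y)"
    unfolding set_integrable_def
    by (rule integrableI_bounded_set_indicator[where B=1])
       (auto simp: shear_velocity_def emeasure_lborel_Icc_eq)
  then have "set_lebesgue_integral lborel {0..t} (\<lambda>s. shear_velocity s y)
      = integral {0..t} (\<lambda>s. shear_velocity s y)"
    by (rule set_borel_integral_eq_integral(2))
  then show ?thesis
    using has_integral_shear_velocity[OF assms] by (simp add: integral_unique)
qed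

lemma shear_phase_has_real_derivative:
  "(shear_phase t has_real_derivative
      (\<Sum>n<nat \<lfloor>t\<rfloor>. real (shear_freq (Suc n)) * cos (real (shear_freq (Suc n)) * y))
      + frac t * (real (shear_freq (Suc (nat \<lfloor>t\<rfloor>))) * cos (real (shear_freq (Suc (nat \<lfloor>t\<rfloor>))) * y)))
    (at y)"
  unfolding shear_phase_def[abs_def]
  by (auto intro!: derivative_eq_intros simp: mult.commute)

lemma shear_phase_differentiable: "shear_phase t differentiable (at y)"
  using shear_phase_has_real_derivative real_differentiable_def by blast

lemma continuous_on_shear_phase: "continuous_on S (shear_phase t)"
  unfolding shear_phase_def[abs_def] by (intro continuous_intros)

lemma abs_deriv_shear_phase_le:
  assumes "0 \<le> t"
  shows "\<bar>deriv (shear_phase t) y\<bar> \<le> real (shear_freq_sum (Suc (nat \<lceil>t\<rceil>)))"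
proof -
  define m where "m = nat \<lfloor>t\<rfloor>"
  define a where "a n = real (shear_freq (Suc n))" for n
  have "\<bar>deriv (shear_phase t) y\<bar>
      = \<bar>(\<Sum>n<m. a n * cos (a n * y)) + frac t * (a m * cos (a m * y))\<bar>"
    using shear_phase_has_real_derivative[of t y] by (simp add: DERIV_imp_deriv m_def a_def)
  also have "\<dots> \<le> (\<Sum>n<m. a n) + frac t * a m"
  proof -
    have "\<bar>\<Sum>n<m. a n * cos (a n * y)\<bar> \<le> (\<Sum>n<m. a n)"
      by (rule order_trans[OF sum_abs sum_mono]) (simp add: a_def abs_mult mult_left_le)
    moreover have "\<bar>frac t * (a m * cos (a m * y))\<bar> \<le> frac t * a m"
      using frac_ge_0[of t] by (simp add: a_def abs_mult mult_left_mono mult_left_le)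
    ultimately show ?thesis
      by (rule order_trans[OF abs_triangle_ineq add_mono])
  qed
  also have "\<dots> \<le> (\<Sum>n<nat \<lceil>t\<rceil>. a n)"
  proof (cases "frac t = 0")
    case True
    then have "nat \<lceil>t\<rceil> = m"
      unfolding m_def by (simp add: ceiling_altdef frac_def)
    then show ?thesis using True by (simp del: frac_eq_0_iff)
  next
    case False
    then have "nat \<lceil>t\<rceil> = Suc m"
      using assms unfolding m_def by (simp add: ceiling_altdef frac_def nat_add_distrib)
    then show ?thesis
      using frac_lt_1[of t] by (simp add: a_def mult_left_le_one_le frac_ge_0)
  qed
  also have "\<dots> \<le> real (shear_freq_sum (Suc (nat \<lceil>t\<rceil>)))"
    unfolding a_def by (rule sum_shear_freq_Suc_le)
  finally show ?thesis .
qed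

lemma shear_phase_lipschitz:
  "\<bar>shear_phase (real k) x - shear_phase (real k) y\<bar> \<le> real (shear_freq_sum (Suc k)) * \<bar>x - y\<bar>"
proof -
  have "norm (shear_phase (real k) x - shear_phase (real k) y) \<le> real (shear_freq_sum (Suc k)) * norm (x - y)"
  proof (rule field_differentiable_bound[of UNIV])
    show "(shear_phase (real k) has_field_derivative deriv (shear_phase (real k)) z) (at z within UNIV)" for z
      using shear_phase_differentiable DERIV_deriv_iff_real_differentiable by blast
    show "norm (deriv (shear_phase (real k)) z) \<le> real (shear_freq_sum (Suc k))" for z
      using abs_deriv_shear_phase_le[of "real k" z] by simp
  qed auto
  then show ?thesis by simp
qed

definition shear_wave :: "(real \<Rightarrow> real) \<Rightarrow> (real \<Rightarrow> real) \<Rightarrow> (real \<Rightarrow> real) \<Rightarrow> real \<Rightarrow> real \<Rightarrow> real" where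
  "shear_wave f g P x y = f y * sin (x - P y) + g y * cos (x - P y)"

lemma transport_sol_shear_velocity:
  assumes "0 \<le> t"
  shows "transport_sol shear_velocity (\<lambda>x y. f y * sin x + g y * cos x) t = shear_wave f g (shear_phase t)"
  unfolding transport_sol_def shear_wave_def[abs_def] set_integral_shear_velocity[OF assms] ..

lemma shear_wave_has_real_derivative_x:
  "((\<lambda>x. shear_wave f g P x y) has_real_derivative f y * cos (x - P y) - g y * sin (x - P y)) (at x)"
  unfolding shear_wave_def by (auto intro!: derivative_eq_intros)

lemma shear_wave_has_real_derivative_y:
  assumes "f differentiable (at y)" "g differentiable (at y)" "P differentiable (at y)"
  shows "((\<lambda>y. shear_wave f g P x y) has_real_derivative
      deriv f y * sin (x - P y) + deriv g y * cos (x - P y)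
      + deriv P y * (g y * sin (x - P y) - f y * cos (x - P y))) (at y)"
  using assms unfolding shear_wave_def DERIV_deriv_iff_real_differentiable[symmetric]
  by (auto intro!: derivative_eq_intros simp: algebra_simps)

section \<open>Sobolev bounds\<close>

lemma nn_set_integral_le_const:
  assumes "A \<in> sets lborel" "\<And>x. x \<in> A \<Longrightarrow> f x \<le> K"
  shows "(\<integral>\<^sup>+x\<in>A. ennreal (f x) \<partial>lborel) \<le> ennreal K * emeasure lborel A"
proof -
  have "(\<integral>\<^sup>+x\<in>A. ennreal (f x) \<partial>lborel) \<le> (\<integral>\<^sup>+x. ennreal K * indicator A x \<partial>lborel)"
    by (intro nn_integral_mono) (auto simp: assms(2) indicator_def ennreal_leI)
  also have "\<dots> = ennreal K * emeasure lborel A"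
    using assms(1) by (rule nn_integral_cmult_indicator)
  finally show ?thesis .
qed

lemma H1_circle_sq_le:
  assumes "\<And>y. y \<in> {-pi..pi} \<Longrightarrow> (u y)\<^sup>2 + (deriv u y)\<^sup>2 \<le> K"
  shows "H1_circle_sq u \<le> ennreal (2 * pi * K)"
proof -
  have "H1_circle_sq u \<le> ennreal K * emeasure lborel {-pi..pi}"
    unfolding H1_circle_sq_def by (rule nn_set_integral_le_const) (use assms in auto)
  also have "\<dots> = ennreal (2 * pi * K)"
    using assms[of 0]
    by (simp add: ennreal_mult'[symmetric] mult.commute add_nonneg_nonneg order_trans[rotated])
  finally show ?thesis .
qed

lemma emeasure_torus_box: "emeasure lborel torus_box = ennreal (4 * pi\<^sup>2)"
proof -
  have "emeasure lborel torus_box = emeasure (lborel \<Otimes>\<^sub>M lborel) ({-pi..pi} \<times> {-pi..pi::real})"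
    unfolding torus_box_def lborel_prod ..
  also have "\<dots> = emeasure lborel {-pi..pi::real} * emeasure lborel {-pi..pi::real}"
    by (rule lborel.emeasure_pair_measure_Times) auto
  also have "\<dots> = ennreal (4 * pi\<^sup>2)"
    by (simp add: ennreal_mult'[symmetric] power2_eq_square)
  finally show ?thesis .
qed

lemma H1_torus_sq_le:
  assumes "\<And>x y. x \<in> {-pi..pi} \<Longrightarrow> y \<in> {-pi..pi} \<Longrightarrow>
    (f x y)\<^sup>2 + (deriv (\<lambda>x. f x y) x)\<^sup>2 + (deriv (\<lambda>y. f x y) y)\<^sup>2 \<le> K"
  shows "H1_torus_sq f \<le> ennreal (4 * pi\<^sup>2 * K)"
proof -
  have "H1_torus_sq f \<le> ennreal K * emeasure lborel torus_box"
    unfolding H1_torus_sq_def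
    by (rule nn_set_integral_le_const) (auto simp: torus_box_def closed_Times assms)
  also have "\<dots> = ennreal (4 * pi\<^sup>2 * K)"
    using assms[of 0 0]
    by (simp add: emeasure_torus_box ennreal_mult'[symmetric] mult.commute add_nonneg_nonneg
        order_trans[rotated])
  finally show ?thesis .
qed

lemma H1_circle_sq_shear_velocity_le:
  assumes "0 \<le> t"
  shows "H1_circle_sq (shear_velocity t)
    \<le> ennreal ((sqrt (2 * pi * (1 + exp 4)) * exp (2 * (of_int \<lceil>t\<rceil>)\<^sup>2))\<^sup>2)"
proof -
  define c where "c = nat \<lceil>t\<rceil>"
  define a where "a = real (shear_freq c)"
  define E where "E = exp (2 * real c ^ 2)"
  have "shear_freq c \<le> shear_freq_sum (Suc c)"
    by (simp add: shear_freq_def)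
  then have "a \<le> exp 2 * E"
    using real_shear_freq_sum_Suc_le[of c] unfolding a_def E_def by linarith
  then have a2: "a\<^sup>2 \<le> exp 4 * E\<^sup>2"
    using power_mono[of a "exp 2 * E" 2] by (simp add: a_def power_mult_distrib flip: exp_of_nat_mult)
  have E1: "1 \<le> E\<^sup>2"
    by (simp add: E_def)
  have "(shear_velocity t y)\<^sup>2 + (deriv (shear_velocity t) y)\<^sup>2 \<le> (1 + exp 4) * E\<^sup>2" for y
  proof -
    have "deriv (shear_velocity t) y = a * cos (a * y)"
      unfolding shear_velocity_def[abs_def] a_def c_def
      by (rule DERIV_imp_deriv) (auto intro!: derivative_eq_intros)
    then have "(shear_velocity t y)\<^sup>2 + (deriv (shear_velocity t) y)\<^sup>2 = (sin (a * y))\<^sup>2 + a\<^sup>2 * (cos (a * y))\<^sup>2"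
      by (simp add: shear_velocity_def a_def c_def power_mult_distrib)
    also have "\<dots> \<le> 1 + a\<^sup>2"
    proof -
      have "(sin (a * y))\<^sup>2 \<le> 1" "(cos (a * y))\<^sup>2 \<le> 1"
        by (simp_all add: abs_square_le_1)
      then show ?thesis
        using mult_left_le[of "(cos (a * y))\<^sup>2" "a\<^sup>2"] by simp
    qed
    finally show ?thesis
      using a2 E1 by (simp add: algebra_simps)
  qed
  then have "H1_circle_sq (shear_velocity t) \<le> ennreal (2 * pi * ((1 + exp 4) * E\<^sup>2))"
    by (rule H1_circle_sq_le)
  also have "2 * pi * ((1 + exp 4) * E\<^sup>2) = (sqrt (2 * pi * (1 + exp 4)) * exp (2 * (of_int \<lceil>t\<rceil>)\<^sup>2))\<^sup>2"
    using assms by (simp add: E_def c_def power_mult_distrib)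
  finally show ?thesis .
qed

lemma abs_mult_add_mult_le:
  fixes a b p q :: real
  assumes "\<bar>p\<bar> \<le> 1" "\<bar>q\<bar> \<le> 1"
  shows "\<bar>a * p + b * q\<bar> \<le> \<bar>a\<bar> + \<bar>b\<bar>"
proof -
  have "\<bar>a * p\<bar> \<le> \<bar>a\<bar>" "\<bar>b * q\<bar> \<le> \<bar>b\<bar>"
    using assms by (simp_all add: abs_mult mult_left_le)
  then show ?thesis
    by linarith
qed

lemma H1_torus_sq_shear_wave_le:
  assumes diff: "\<And>y. f differentiable (at y)" "\<And>y. g differentiable (at y)" "\<And>y. P differentiable (at y)"
    and bounds: "\<And>y. y \<in> {-pi..pi} \<Longrightarrow>
      \<bar>f y\<bar> \<le> M \<and> \<bar>g y\<bar> \<le> M \<and> \<bar>deriv f y\<bar> \<le> M \<and> \<bar>deriv g y\<bar> \<le> M \<and> \<bar>deriv P y\<bar> \<le> L"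
  shows "H1_torus_sq (shear_wave f g P) \<le> ennreal (48 * pi\<^sup>2 * M\<^sup>2 * (1 + L)\<^sup>2)"
proof -
  have "(shear_wave f g P x y)\<^sup>2 + (deriv (\<lambda>x. shear_wave f g P x y) x)\<^sup>2
      + (deriv (\<lambda>y. shear_wave f g P x y) y)\<^sup>2 \<le> 12 * M\<^sup>2 * (1 + L)\<^sup>2"
    if "y \<in> {-pi..pi}" for x y
  proof -
    define s c where "s = sin (x - P y)" and "c = cos (x - P y)"
    have sc: "\<bar>s\<bar> \<le> 1" "\<bar>c\<bar> \<le> 1" "\<bar>-s\<bar> \<le> 1" "\<bar>-c\<bar> \<le> 1"
      by (simp_all add: s_def c_def)
    note b = bounds[OF that]
    have M: "0 \<le> M" and L: "0 \<le> L"
      using b by linarith+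
    define B where "B = 2 * M * (1 + L)"
    have sq: "a\<^sup>2 \<le> B\<^sup>2" if "\<bar>a\<bar> \<le> B" for a
      using power_mono[OF that abs_ge_zero, of 2] by simp
    have "2 * M \<le> B"
      using M L by (simp add: B_def algebra_simps)
    moreover have "\<bar>shear_wave f g P x y\<bar> \<le> 2 * M"
      using abs_mult_add_mult_le[OF sc(1,2), of "f y" "g y"] b by (simp add: shear_wave_def s_def c_def)
    moreover have "\<bar>deriv (\<lambda>x. shear_wave f g P x y) x\<bar> \<le> 2 * M"
      using abs_mult_add_mult_le[OF sc(2,3), of "f y" "g y"] b
      by (simp add: DERIV_imp_deriv[OF shear_wave_has_real_derivative_x] s_def c_def)
    moreover have "\<bar>deriv (\<lambda>y. shear_wave f g P x y) y\<bar> \<le> B"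
    proof -
      have "\<bar>deriv f y * s + deriv g y * c\<bar> \<le> 2 * M"
        using abs_mult_add_mult_le[OF sc(1,2), of "deriv f y" "deriv g y"] b by simp
      moreover have "\<bar>deriv P y * (g y * s + f y * - c)\<bar> \<le> L * (2 * M)"
        using abs_mult_add_mult_le[OF sc(1,4), of "g y" "f y"] b unfolding abs_mult
        by (intro mult_mono) auto
      ultimately show ?thesis
        using DERIV_imp_deriv[OF shear_wave_has_real_derivative_y[where x=x and y=y, OF diff]]
        by (simp add: B_def s_def c_def algebra_simps)
    qed
    ultimately have "(shear_wave f g P x y)\<^sup>2 + (deriv (\<lambda>x. shear_wave f g P x y) x)\<^sup>2
      + (deriv (\<lambda>y. shear_wave f g P x y) y)\<^sup>2 \<le> B\<^sup>2 + B\<^sup>2 + B\<^sup>2"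
      by (intro add_mono sq) linarith+
    then show ?thesis
      by (simp add: B_def power_mult_distrib)
  qed
  then have "H1_torus_sq (shear_wave f g P) \<le> ennreal (4 * pi\<^sup>2 * (12 * M\<^sup>2 * (1 + L)\<^sup>2))"
    by (rule H1_torus_sq_le)
  then show ?thesis
    by (simp add: mult.assoc)
qed

lemma H1_torus_sq_shear_wave_shear_phase_le:
  assumes f: "smooth_fun f" and g: "smooth_fun g"
  obtains C where "0 < C"
    "\<And>t. 0 \<le> t \<Longrightarrow> H1_torus_sq (shear_wave f g (shear_phase t)) \<le> ennreal ((C * exp (2 * (of_int \<lceil>t\<rceil>)\<^sup>2))\<^sup>2)"
proof -
  obtain M where M0: "0 < M"
    and M: "\<And>y. y \<in> {-pi..pi} \<Longrightarrow> \<bar>f y\<bar> \<le> M \<and> \<bar>g y\<bar> \<le> M \<and> \<bar>deriv f y\<bar> \<le> M \<and> \<bar>deriv g y\<bar> \<le> M"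
    using smooth_funs_bounded[OF f g] by blast
  define C where "C = 7 * pi * M * (1 + exp 2)"
  have "0 < C"
    using M0 by (simp add: C_def add_pos_pos)
  moreover have "H1_torus_sq (shear_wave f g (shear_phase t)) \<le> ennreal ((C * exp (2 * (of_int \<lceil>t\<rceil>)\<^sup>2))\<^sup>2)"
    if t: "0 \<le> t" for t
  proof -
    define c where "c = nat \<lceil>t\<rceil>"
    define E where "E = exp (2 * real c ^ 2)"
    define L where "L = real (shear_freq_sum (Suc c))"
    have df: "f differentiable (at y)" "g differentiable (at y)" for y
      using smooth_fun_has_real_derivative[OF f] smooth_fun_has_real_derivative[OF g] real_differentiable_def
      by blast+
    have "H1_torus_sq (shear_wave f g (shear_phase t)) \<le> ennreal (48 * pi\<^sup>2 * M\<^sup>2 * (1 + L)\<^sup>2)"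
      using M abs_deriv_shear_phase_le[OF t] unfolding L_def c_def
      by (intro H1_torus_sq_shear_wave_le df shear_phase_differentiable) (auto simp del: shear_freq_sum.simps)
    also have "ennreal (48 * pi\<^sup>2 * M\<^sup>2 * (1 + L)\<^sup>2) \<le> ennreal ((C * E)\<^sup>2)"
    proof (rule ennreal_leI)
      have "1 \<le> E" "L \<le> exp 2 * E"
        unfolding E_def L_def by (simp, rule real_shear_freq_sum_Suc_le)
      then have "1 + L \<le> (1 + exp 2) * E"
        unfolding distrib_right by linarith
      then have "(1 + L)\<^sup>2 \<le> ((1 + exp 2) * E)\<^sup>2"
        by (intro power_mono) (auto simp: L_def)
      then have "48 * pi\<^sup>2 * M\<^sup>2 * (1 + L)\<^sup>2 \<le> 49 * pi\<^sup>2 * M\<^sup>2 * ((1 + exp 2) * E)\<^sup>2"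
        by (intro mult_mono) auto
      then show "48 * pi\<^sup>2 * M\<^sup>2 * (1 + L)\<^sup>2 \<le> (C * E)\<^sup>2"
        by (simp add: C_def power_mult_distrib)
    qed
    finally show ?thesis
      using t by (simp add: E_def c_def)
  qed
  ultimately show ?thesis
    using that by blast
qed

section \<open>Fourier coefficients and the negative Sobolev norm\<close>

definition circle_coeff :: "(real \<Rightarrow> complex) \<Rightarrow> int \<Rightarrow> complex" where
  "circle_coeff H l = integral {-pi..pi} (\<lambda>y. H y * cis (- (of_int l * y)))"

definition wave_profile ::
  "(real \<Rightarrow> real) \<Rightarrow> (real \<Rightarrow> real) \<Rightarrow> (real \<Rightarrow> real) \<Rightarrow> real \<Rightarrow> real \<Rightarrow> complex" where
  "wave_profile f g P \<sigma> y = Complex (g y) (- \<sigma> * f y) * cis (- \<sigma> * P y)"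

lemma continuous_on_wave_profile:
  assumes "continuous_on S f" "continuous_on S g" "continuous_on S P"
  shows "continuous_on S (wave_profile f g P \<sigma>)"
  unfolding wave_profile_def[abs_def] Complex_eq by (intro continuous_intros assms)

lemma shear_wave_eq_wave_profiles:
  "complex_of_real (shear_wave f g P x y)
    = (wave_profile f g P 1 y * cis x + wave_profile f g P (-1) y * cis (-x)) / 2"
proof -
  define w where "w = x - P y"
  have "cis (- P y) * cis x = cis w" "cis (P y) * cis (-x) = cis (-w)"
    unfolding w_def by (simp_all add: cis_mult)
  then have "wave_profile f g P 1 y * cis x + wave_profile f g P (-1) y * cis (-x)
      = Complex (g y) (- f y) * cis w + Complex (g y) (f y) * cis (-w)"
    unfolding wave_profile_def by (simp add: mult.assoc)
  also have "\<dots> = complex_of_real (2 * (f y * sin w + g y * cos w))"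
    by (simp add: complex_eq_iff algebra_simps)
  finally show ?thesis
    by (simp add: shear_wave_def w_def)
qed

lemma has_vector_derivative_cis_mult:
  "((\<lambda>x. cis (a * x)) has_vector_derivative (\<i> * complex_of_real a * cis (a * x))) (at x within S)"
proof -
  have "((\<lambda>x. cis (a * x)) has_derivative (\<lambda>t. (a * t) *\<^sub>R (\<i> * cis (a * x)))) (at x within S)"
    by (intro has_derivative_cis derivative_intros)
  then show ?thesis
    unfolding has_vector_derivative_def
    by (rule has_derivative_eq_rhs) (auto simp: fun_eq_iff scaleR_conv_of_real algebra_simps)
qed

lemma integral_cis_int_mult:
  "integral {-pi..pi} (\<lambda>x. cis (of_int j * x)) = (if j = 0 then complex_of_real (2 * pi) else 0)"
proof (cases "j = 0")
  case True
  then show ?thesis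
    by (simp add: scaleR_conv_of_real)
next
  case False
  define F where "F x = cis (of_int j * x) / (\<i> * complex_of_real (of_int j))" for x
  have "((\<lambda>x. cis (of_int j * x)) has_integral (F pi - F (-pi))) {-pi..pi}"
  proof (rule fundamental_theorem_of_calculus)
    fix x :: real
    have "(F has_vector_derivative (\<i> * complex_of_real (of_int j) * cis (of_int j * x))
        / (\<i> * complex_of_real (of_int j))) (at x within {-pi..pi})"
      unfolding F_def by (intro has_vector_derivative_divide has_vector_derivative_cis_mult)
    then show "(F has_vector_derivative cis (of_int j * x)) (at x within {-pi..pi})"
      using False by simp
  qed simp
  moreover have "cis (of_int j * pi) = cis (- (of_int j * pi)) * cis (2 * pi * of_int j)"
    by (simp add: cis_mult algebra_simps)
  then have "F pi = F (-pi)"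
    by (simp add: F_def cis.ctr complex_eq_iff)
  ultimately show ?thesis
    using False by (simp add: integral_unique)
qed

lemma integral_torus_box_cis_mult:
  fixes V :: "real \<Rightarrow> complex"
  assumes V: "continuous_on {-pi..pi} V"
  shows "integral torus_box (\<lambda>p. cis (of_int j * fst p) * V (snd p))
    = (if j = 0 then complex_of_real (2 * pi) * integral {-pi..pi} V else 0)"
proof -
  have box: "torus_box = cbox (-pi, -pi) (pi, pi)"
    unfolding torus_box_def cbox_Pair_eq by simp
  have "continuous_on torus_box (\<lambda>p. cis (of_int j * fst p) * V (snd p))"
    unfolding torus_box_def
    by (intro continuous_intros continuous_on_compose2[OF V continuous_on_snd]) auto
  then have "integral torus_box (\<lambda>p. cis (of_int j * fst p) * V (snd p))
      = integral {-pi..pi} (\<lambda>x. integral {-pi..pi} (\<lambda>y. cis (of_int j * x) * V y))"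
    unfolding box by (simp add: integral_prod_continuous)
  then show ?thesis
    by (simp add: integral_mult_right integral_mult_left integral_cis_int_mult)
qed

lemma shear_wave_mult_cis_eq:
  "complex_of_real (shear_wave f g P x y) * cis (- (of_int k * x + of_int l * y))
    = (cis (of_int (1 - k) * x) * (wave_profile f g P 1 y * cis (- (of_int l * y)))
      + cis (of_int (-1 - k) * x) * (wave_profile f g P (-1) y * cis (- (of_int l * y)))) / 2"
proof -
  have e: "cis x * cis (- (of_int k * x + of_int l * y)) = cis (of_int (1 - k) * x) * cis (- (of_int l * y))"
    "cis (-x) * cis (- (of_int k * x + of_int l * y)) = cis (of_int (-1 - k) * x) * cis (- (of_int l * y))"
    by (simp_all add: cis_mult algebra_simps)
  have "complex_of_real (shear_wave f g P x y) * cis (- (of_int k * x + of_int l * y))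
      = (wave_profile f g P 1 y * (cis x * cis (- (of_int k * x + of_int l * y)))
        + wave_profile f g P (-1) y * (cis (-x) * cis (- (of_int k * x + of_int l * y)))) / 2"
    unfolding shear_wave_eq_wave_profiles by (simp add: algebra_simps)
  also have "\<dots> = (cis (of_int (1 - k) * x) * (wave_profile f g P 1 y * cis (- (of_int l * y)))
      + cis (of_int (-1 - k) * x) * (wave_profile f g P (-1) y * cis (- (of_int l * y)))) / 2"
    unfolding e by (simp add: algebra_simps)
  finally show ?thesis .
qed

lemma fourier_coeff_shear_wave:
  assumes "continuous_on UNIV f" "continuous_on UNIV g" "continuous_on UNIV P"
  shows "fourier_coeff (shear_wave f g P) (k, l) =
     (if k = 1 then circle_coeff (wave_profile f g P 1) l / complex_of_real (4 * pi) else 0)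
   + (if k = -1 then circle_coeff (wave_profile f g P (-1)) l / complex_of_real (4 * pi) else 0)"
proof -
  define V where "V = (\<lambda>\<sigma> y. wave_profile f g P \<sigma> y * cis (- (of_int l * y)))"
  define G where "G = (\<lambda>j \<sigma> (p :: real \<times> real). cis (of_int j * fst p) * V \<sigma> (snd p))"
  have V: "continuous_on {-pi..pi} (V \<sigma>)" for \<sigma>
    unfolding V_def
    by (intro continuous_intros continuous_on_wave_profile continuous_on_subset[OF assms(1)]
        continuous_on_subset[OF assms(2)] continuous_on_subset[OF assms(3)]) auto
  have box: "torus_box = cbox (-pi, -pi) (pi, pi)"
    unfolding torus_box_def cbox_Pair_eq by simp
  have G: "continuous_on (cbox (-pi, -pi) (pi, pi)) (G j \<sigma>)" for j \<sigma>
    unfolding G_def cbox_Pair_eq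
    by (intro continuous_intros continuous_on_compose2[OF V continuous_on_snd]) auto
  have "fourier_coeff (shear_wave f g P) (k, l)
      = (1 / (4 * pi\<^sup>2)) *\<^sub>R set_lebesgue_integral lborel torus_box (\<lambda>p. (G (1 - k) 1 p + G (-1 - k) (-1) p) / 2)"
    unfolding fourier_coeff_def shear_wave_mult_cis_eq G_def V_def by simp
  also have "set_lebesgue_integral lborel torus_box (\<lambda>p. (G (1 - k) 1 p + G (-1 - k) (-1) p) / 2)
      = integral torus_box (\<lambda>p. (G (1 - k) 1 p + G (-1 - k) (-1) p) / 2)"
    unfolding box
    by (intro set_borel_integral_eq_integral(2))
       (auto simp: set_integrable_def intro!: borel_integrable_compact compact_cbox continuous_intros G)
  also have "\<dots> = (integral torus_box (G (1 - k) 1) + integral torus_box (G (-1 - k) (-1))) / 2"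
    unfolding box using integrable_continuous[OF G] by (simp add: integral_divide integral_add)
  finally have "fourier_coeff (shear_wave f g P) (k, l)
      = (1 / (4 * pi\<^sup>2)) *\<^sub>R ((integral torus_box (G (1 - k) 1) + integral torus_box (G (-1 - k) (-1))) / 2)" .
  moreover have "integral torus_box (G j \<sigma>)
      = (if j = 0 then complex_of_real (2 * pi) * integral {-pi..pi} (V \<sigma>) else 0)" for j \<sigma>
    unfolding G_def by (rule integral_torus_box_cis_mult[OF V])
  moreover have "integral {-pi..pi} (V \<sigma>) = circle_coeff (wave_profile f g P \<sigma>) l" for \<sigma>
    unfolding V_def circle_coeff_def ..
  ultimately show ?thesis
    by (auto simp: scaleR_conv_of_real power2_eq_square field_simps)
qed

lemma circle_coeff_by_parts:
  assumes H: "continuous_on {-pi..pi} H"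
  shows "circle_coeff H l = integral {-pi..pi} H * cis (- (of_int l * pi))
    + \<i> * of_int l * circle_coeff (\<lambda>y. integral {-pi..y} H) l"
proof -
  define V where "V y = integral {-pi..y} H" for y
  define c where "c y = cis (- (of_int l * y))" for y
  have cV: "continuous_on {-pi..pi} V"
    unfolding V_def by (rule indefinite_integral_continuous_1[OF integrable_continuous_interval[OF H]])
  have dc: "(c has_vector_derivative (\<i> * complex_of_real (- of_int l) * c y)) (at y within {-pi..pi})" for y
    using has_vector_derivative_cis_mult[of "- of_int l" y "{-pi..pi}"] unfolding c_def by simp
  have "((\<lambda>y. H y * c y + V y * (\<i> * complex_of_real (- of_int l) * c y)) has_integral
      V pi * c pi - V (-pi) * c (-pi)) {-pi..pi}"
  proof (rule fundamental_theorem_of_calculus)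
    fix y assume "y \<in> {-pi..pi}"
    then have "(V has_vector_derivative H y) (at y within {-pi..pi})"
      unfolding V_def by (rule integral_has_vector_derivative[OF H])
    from has_vector_derivative_mult[OF this dc[of y]]
    show "((\<lambda>y. V y * c y) has_vector_derivative H y * c y + V y * (\<i> * complex_of_real (- of_int l) * c y))
        (at y within {-pi..pi})"
      by (simp add: algebra_simps)
  qed simp
  then have I1: "((\<lambda>y. H y * c y + V y * (\<i> * complex_of_real (- of_int l) * c y)) has_integral
      V pi * c pi) {-pi..pi}"
    by (simp add: V_def)
  have "((\<lambda>y. V y * c y) has_integral circle_coeff V l) {-pi..pi}"
    unfolding circle_coeff_def c_def
    by (intro integrable_integral integrable_continuous_interval continuous_intros cV)
  from has_integral_mult_right[OF this, of "- \<i> * of_int l"]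
  have I2: "((\<lambda>y. V y * (\<i> * complex_of_real (- of_int l) * c y)) has_integral
      - \<i> * of_int l * circle_coeff V l) {-pi..pi}"
    by (simp add: algebra_simps)
  have "((\<lambda>y. H y * c y) has_integral (V pi * c pi - (- \<i> * of_int l * circle_coeff V l))) {-pi..pi}"
    using has_integral_diff[OF I1 I2] by simp
  then have "circle_coeff H l = V pi * c pi + \<i> * of_int l * circle_coeff V l"
    unfolding circle_coeff_def c_def[symmetric] by (simp add: integral_unique)
  then show ?thesis
    unfolding V_def c_def by (simp add: V_def[abs_def])
qed

lemma integral_mult_cnj_trig_poly:
  fixes V :: "real \<Rightarrow> complex"
  assumes "continuous_on {-pi..pi} V" "finite L"
  shows "integral {-pi..pi} (\<lambda>y. V y * cnj (\<Sum>l\<in>L. c l * cis (of_int l * y)))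
    = (\<Sum>l\<in>L. cnj (c l) * circle_coeff V l)"
proof -
  have eq: "V y * cnj (\<Sum>l\<in>L. c l * cis (of_int l * y))
      = (\<Sum>l\<in>L. cnj (c l) * (V y * cis (- (of_int l * y))))" for y
    by (simp add: sum_distrib_left cis_cnj algebra_simps)
  show ?thesis
    unfolding circle_coeff_def eq using assms
    by (subst integral_sum)
       (auto intro!: integrable_continuous_interval continuous_intros simp: integral_mult_right)
qed

lemma integral_trig_poly_norm_square:
  assumes "finite L"
  shows "integral {-pi..pi} (\<lambda>y. (cmod (\<Sum>l\<in>L. c l * cis (of_int l * y)))\<^sup>2) = 2 * pi * (\<Sum>l\<in>L. (cmod (c l))\<^sup>2)"
proof -
  define e where "e l y = cis (of_int l * y)" for l and y :: real
  have int: "(\<lambda>y. a * (e l y * cnj (e m y))) integrable_on {-pi..pi}" for a l m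
    unfolding e_def by (intro integrable_continuous_interval continuous_intros)
  have orth: "integral {-pi..pi} (\<lambda>y. e l y * cnj (e m y))
      = (if l = m then complex_of_real (2 * pi) else 0)" for l m
  proof -
    have "e l y * cnj (e m y) = cis (of_int (l - m) * y)" for y
      unfolding e_def cis_cnj by (simp add: cis_mult algebra_simps)
    then show ?thesis
      using integral_cis_int_mult[of "l - m"] by simp
  qed
  define Q where "Q y = (\<Sum>l\<in>L. \<Sum>m\<in>L. c l * cnj (c m) * (e l y * cnj (e m y)))" for y
  have Q: "(cmod (\<Sum>l\<in>L. c l * e l y))\<^sup>2 = Re (Q y)" for y
  proof -
    have "(cmod (\<Sum>l\<in>L. c l * e l y))\<^sup>2 = Re ((\<Sum>l\<in>L. c l * e l y) * cnj (\<Sum>m\<in>L. c m * e m y))"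
      by (metis Re_complex_of_real complex_norm_square)
    then show ?thesis
      by (simp add: Q_def sum_product mult_ac)
  qed
  have intQ: "Q integrable_on {-pi..pi}"
    unfolding Q_def using assms by (intro integrable_sum int)
  have "integral {-pi..pi} Q = (\<Sum>l\<in>L. \<Sum>m\<in>L. c l * cnj (c m) * integral {-pi..pi} (\<lambda>y. e l y * cnj (e m y)))"
    unfolding Q_def using assms
    by (simp add: integral_sum integrable_sum int integral_mult_right)
  also have "\<dots> = complex_of_real (2 * pi * (\<Sum>l\<in>L. (cmod (c l))\<^sup>2))"
    unfolding orth using assms
    by (simp add: if_distrib sum_distrib_left complex_norm_square mult_ac flip: of_real_power cong: if_cong)
  finally have "((\<lambda>y. (cmod (\<Sum>l\<in>L. c l * e l y))\<^sup>2) has_integral 2 * pi * (\<Sum>l\<in>L. (cmod (c l))\<^sup>2)) {-pi..pi}"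
    using has_integral_Re[OF integrable_integral[OF intQ]] unfolding Q by simp
  then show ?thesis
    unfolding e_def by (rule integral_unique)
qed

lemma bessel_inequality_circle_coeff:
  fixes V :: "real \<Rightarrow> complex"
  assumes V: "continuous_on {-pi..pi} V" and L: "finite L"
  shows "(\<Sum>l\<in>L. (cmod (circle_coeff V l))\<^sup>2) \<le> 2 * pi * integral {-pi..pi} (\<lambda>y. (cmod (V y))\<^sup>2)"
proof -
  define c where "c l = circle_coeff V l / complex_of_real (2 * pi)" for l
  define P where "P y = (\<Sum>l\<in>L. c l * cis (of_int l * y))" for y
  define S where "S = (\<Sum>l\<in>L. (cmod (circle_coeff V l))\<^sup>2)"
  have int: "f integrable_on {-pi..pi}" if "continuous_on {-pi..pi} f" for f :: "real \<Rightarrow> 'a::banach"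
    using that by (rule integrable_continuous_interval)
  have cP: "continuous_on {-pi..pi} P"
    unfolding P_def by (intro continuous_intros)
  have "cnj (z / complex_of_real (2 * pi)) * z = complex_of_real ((cmod z)\<^sup>2 / (2 * pi))" for z
    using complex_norm_square by auto
  then have "integral {-pi..pi} (\<lambda>y. V y * cnj (P y))
      = (\<Sum>l\<in>L. complex_of_real ((cmod (circle_coeff V l))\<^sup>2 / (2 * pi)))"
    unfolding P_def integral_mult_cnj_trig_poly[OF V L] c_def by (rule sum.cong[OF refl])
  also have "\<dots> = complex_of_real (S / (2 * pi))"
    by (simp only: S_def of_real_sum sum_divide_distrib)
  moreover have "((\<lambda>y. V y * cnj (P y)) has_integral integral {-pi..pi} (\<lambda>y. V y * cnj (P y))) {-pi..pi}"
    by (intro integrable_integral int continuous_intros V cP)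
  ultimately have "((\<lambda>y. V y * cnj (P y)) has_integral complex_of_real (S / (2 * pi))) {-pi..pi}"
    by simp
  from has_integral_Re[OF this] have VP: "((\<lambda>y. Re (V y * cnj (P y))) has_integral S / (2 * pi)) {-pi..pi}"
    by simp
  have "integral {-pi..pi} (\<lambda>y. (cmod (P y))\<^sup>2) = S / (2 * pi)"
    unfolding P_def integral_trig_poly_norm_square[OF L] S_def c_def
    by (simp add: norm_divide power_divide power2_eq_square field_simps flip: sum_divide_distrib)
  moreover have "((\<lambda>y. (cmod (P y))\<^sup>2) has_integral integral {-pi..pi} (\<lambda>y. (cmod (P y))\<^sup>2)) {-pi..pi}"
    by (intro integrable_integral int continuous_intros cP)
  ultimately have PP: "((\<lambda>y. (cmod (P y))\<^sup>2) has_integral S / (2 * pi)) {-pi..pi}"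
    by simp
  have VV: "((\<lambda>y. (cmod (V y))\<^sup>2) has_integral integral {-pi..pi} (\<lambda>y. (cmod (V y))\<^sup>2)) {-pi..pi}"
    by (intro integrable_integral int continuous_intros V)
  have eq: "(\<lambda>y. (cmod (V y - P y))\<^sup>2) = (\<lambda>y. (cmod (V y))\<^sup>2 - 2 * Re (V y * cnj (P y)) + (cmod (P y))\<^sup>2)"
    by (rule ext) (simp only: cmod_power2, simp add: power2_eq_square algebra_simps)
  have "((\<lambda>y. (cmod (V y - P y))\<^sup>2) has_integral
      integral {-pi..pi} (\<lambda>y. (cmod (V y))\<^sup>2) - 2 * (S / (2 * pi)) + S / (2 * pi)) {-pi..pi}"
    unfolding eq by (rule has_integral_add[OF has_integral_diff[OF VV has_integral_mult_right[OF VP]] PP])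
  then have "0 \<le> integral {-pi..pi} (\<lambda>y. (cmod (V y))\<^sup>2) - 2 * (S / (2 * pi)) + S / (2 * pi)"
    by (rule has_integral_nonneg) simp
  then show ?thesis
    by (simp add: S_def field_simps)
qed

lemma sum_inverse_one_plus_square_symmetric_le:
  "(\<Sum>l\<in>{-int n..int n}. 1 / (1 + (of_int l)\<^sup>2)) \<le> (5::real) - 4 / (real n + 1)"
proof (induction n)
  case (Suc n)
  define x where "x = real n"
  have x: "0 \<le> x"
    by (simp add: x_def)
  have "{-int (Suc n)..int (Suc n)} = insert (int n + 1) (insert (-(int n + 1)) {-int n..int n})"
    by auto
  then have "(\<Sum>l\<in>{-int (Suc n)..int (Suc n)}. 1 / (1 + (of_int l)\<^sup>2))
      = 2 / (1 + (x + 1)\<^sup>2) + (\<Sum>l\<in>{-int n..int n}. 1 / (1 + (of_int l :: real)\<^sup>2))"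
    by (simp add: x_def power2_eq_square algebra_simps)
  moreover have "2 / (1 + (x + 1)\<^sup>2) \<le> 4 / ((x + 1) * (x + 2))"
  proof -
    have "0 < (x + 1) * (x + 2)" "0 < 1 + (x + 1)\<^sup>2"
      using x by (auto simp: add_pos_nonneg)
    moreover have "2 * ((x + 1) * (x + 2)) \<le> 4 * (1 + (x + 1)\<^sup>2)"
      using x by (simp add: power2_eq_square algebra_simps)
    ultimately show ?thesis
      by (simp add: field_simps)
  qed
  moreover have "4 / ((x + 1) * (x + 2)) = 4 / (x + 1) - 4 / (x + 2)"
    using x by (simp add: field_simps)
  ultimately show ?case
    using Suc by (simp add: x_def algebra_simps)
qed simp

lemma sum_inverse_one_plus_square_le:
  assumes "finite L"
  shows "(\<Sum>l\<in>L. 1 / (1 + (of_int l)\<^sup>2)) \<le> (5::real)"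
proof -
  define n where "n = (\<Sum>l\<in>L. nat \<bar>l\<bar>)"
  have "L \<subseteq> {-int n..int n}"
  proof
    fix l assume "l \<in> L"
    then have "nat \<bar>l\<bar> \<le> n"
      unfolding n_def using assms by (intro member_le_sum) auto
    then show "l \<in> {-int n..int n}"
      by auto
  qed
  then have "(\<Sum>l\<in>L. 1 / (1 + (of_int l)\<^sup>2)) \<le> (\<Sum>l\<in>{-int n..int n}. 1 / (1 + (of_int l :: real)\<^sup>2))"
    by (intro sum_mono2) (auto simp: add_pos_nonneg)
  also have "\<dots> \<le> 5"
    by (rule order_trans[OF sum_inverse_one_plus_square_symmetric_le]) simp
  finally show ?thesis .
qed

lemma circle_coeff_weighted_le:
  assumes H: "continuous_on {-pi..pi} H" and W: "cmod (integral {-pi..pi} H) \<le> W"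
  shows "(cmod (circle_coeff H l))\<^sup>2 / (1 + (of_int l)\<^sup>2)
    \<le> 2 * W\<^sup>2 / (1 + (of_int l)\<^sup>2) + 2 * (cmod (circle_coeff (\<lambda>y. integral {-pi..y} H) l))\<^sup>2"
proof -
  define x where "x = \<bar>of_int l :: real\<bar> * cmod (circle_coeff (\<lambda>y. integral {-pi..y} H) l)"
  have "cmod (circle_coeff H l) \<le> W + x"
    unfolding circle_coeff_by_parts[OF H] x_def
    by (rule order_trans[OF norm_triangle_ineq]) (simp add: norm_mult W)
  moreover have "0 \<le> W"
    using W norm_ge_zero order_trans by blast
  ultimately have "(cmod (circle_coeff H l))\<^sup>2 \<le> (W + x)\<^sup>2"
    by (intro power_mono) auto
  also have "\<dots> \<le> 2 * W\<^sup>2 + 2 * x\<^sup>2"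
    using sum_squares_bound[of W x] by (simp add: power2_sum)
  finally have "(cmod (circle_coeff H l))\<^sup>2 / (1 + (of_int l)\<^sup>2) \<le> (2 * W\<^sup>2 + 2 * x\<^sup>2) / (1 + (of_int l)\<^sup>2)"
    by (simp add: divide_right_mono)
  also have "\<dots> = 2 * W\<^sup>2 / (1 + (of_int l)\<^sup>2)
      + 2 * (cmod (circle_coeff (\<lambda>y. integral {-pi..y} H) l))\<^sup>2 * ((of_int l)\<^sup>2 / (1 + (of_int l)\<^sup>2))"
    by (simp add: x_def power_mult_distrib add_divide_distrib)
  also have "\<dots> \<le> 2 * W\<^sup>2 / (1 + (of_int l)\<^sup>2) + 2 * (cmod (circle_coeff (\<lambda>y. integral {-pi..y} H) l))\<^sup>2"
    by (intro add_left_mono mult_left_le) (simp_all add: add_pos_nonneg)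
  finally show ?thesis .
qed

lemma sum_circle_coeff_weighted_le:
  assumes H: "continuous_on {-pi..pi} H"
    and W: "\<And>y. y \<in> {-pi..pi} \<Longrightarrow> cmod (integral {-pi..y} H) \<le> W" and L: "finite L"
  shows "(\<Sum>l\<in>L. (cmod (circle_coeff H l))\<^sup>2 / (1 + (of_int l)\<^sup>2)) \<le> (10 + 8 * pi\<^sup>2) * W\<^sup>2"
proof -
  define V where "V y = integral {-pi..y} H" for y
  have V: "continuous_on {-pi..pi} V"
    unfolding V_def by (rule indefinite_integral_continuous_1[OF integrable_continuous_interval[OF H]])
  have "integral {-pi..pi} (\<lambda>y. (cmod (V y))\<^sup>2) \<le> integral {-pi..pi} (\<lambda>y. W\<^sup>2)"
    using W unfolding V_def
    by (intro integral_le integrable_continuous_interval continuous_intros V[unfolded V_def])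
       (auto intro!: power_mono)
  then have VW: "integral {-pi..pi} (\<lambda>y. (cmod (V y))\<^sup>2) \<le> 2 * pi * W\<^sup>2"
    by simp
  have "(\<Sum>l\<in>L. (cmod (circle_coeff H l))\<^sup>2 / (1 + (of_int l)\<^sup>2))
      \<le> (\<Sum>l\<in>L. 2 * W\<^sup>2 / (1 + (of_int l)\<^sup>2) + 2 * (cmod (circle_coeff V l))\<^sup>2)"
    unfolding V_def by (intro sum_mono circle_coeff_weighted_le H W) auto
  also have "\<dots> = 2 * W\<^sup>2 * (\<Sum>l\<in>L. 1 / (1 + (of_int l)\<^sup>2)) + 2 * (\<Sum>l\<in>L. (cmod (circle_coeff V l))\<^sup>2)"
    by (simp add: sum.distrib sum_distrib_left)
  also have "\<dots> \<le> 2 * W\<^sup>2 * 5 + 2 * (2 * pi * (2 * pi * W\<^sup>2))"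
  proof -
    have "(\<Sum>l\<in>L. (cmod (circle_coeff V l))\<^sup>2) \<le> 2 * pi * (2 * pi * W\<^sup>2)"
      by (rule order_trans[OF bessel_inequality_circle_coeff[OF V L]]) (intro mult_left_mono VW; simp)
    then show ?thesis
      using sum_inverse_one_plus_square_le[OF L] by (intro add_mono mult_left_mono) auto
  qed
  also have "\<dots> = (10 + 8 * pi\<^sup>2) * W\<^sup>2"
    by (simp add: power2_eq_square algebra_simps)
  finally show ?thesis .
qed

lemma nn_integral_count_space_le_finite_sums:
  fixes g :: "'a::countable \<Rightarrow> real"
  assumes nonneg: "\<And>x. 0 \<le> g x" and sums: "\<And>F. finite F \<Longrightarrow> F \<subseteq> A \<Longrightarrow> (\<Sum>x\<in>F. g x) \<le> c"
  shows "(\<integral>\<^sup>+x. ennreal (g x) \<partial>count_space A) \<le> ennreal c"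
proof (cases "finite A")
  case True
  then show ?thesis
    using sums[of A] nonneg by (simp add: nn_integral_count_space_finite ennreal_leI)
next
  case False
  define h where "h = from_nat_into A"
  have bij: "bij_betw h UNIV A"
    unfolding h_def using False by (intro bij_betw_from_nat_into) auto
  have "(\<integral>\<^sup>+x. ennreal (g x) \<partial>count_space A) = (\<Sum>n. ennreal (g (h n)))"
    by (simp add: nn_integral_bij_count_space[OF bij, symmetric] nn_integral_count_space_nat)
  also have "\<dots> \<le> ennreal c"
  proof (rule suminf_le_const)
    fix N
    have "inj_on h {..<N}"
      using bij by (auto simp: bij_betw_def intro: inj_on_subset)
    then have "(\<Sum>n<N. ennreal (g (h n))) = ennreal (\<Sum>x\<in>h ` {..<N}. g x)"
      using nonneg by (simp add: sum.reindex)
    also have "\<dots> \<le> ennreal c"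
      using bij by (intro ennreal_leI sums) (auto simp: bij_betw_def)
    finally show "(\<Sum>n<N. ennreal (g (h n))) \<le> ennreal c" .
  qed simp
  finally show ?thesis .
qed

lemma Hm1_torus_sq_shear_wave_le:
  assumes f: "continuous_on UNIV f" and g: "continuous_on UNIV g" and P: "continuous_on UNIV P"
    and W: "\<And>\<sigma> y. \<bar>\<sigma>\<bar> = 1 \<Longrightarrow> y \<in> {-pi..pi} \<Longrightarrow> cmod (integral {-pi..y} (wave_profile f g P \<sigma>)) \<le> W"
  shows "Hm1_torus_sq (shear_wave f g P) \<le> ennreal ((10 + 8 * pi\<^sup>2) * W\<^sup>2 / (8 * pi\<^sup>2))"
proof -
  define a where "a \<sigma> l = (cmod (circle_coeff (wave_profile f g P \<sigma>) l))\<^sup>2 / (1 + (of_int l)\<^sup>2) / (16 * pi\<^sup>2)"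
    for \<sigma> l
  define G where "G \<xi> = (cmod (fourier_coeff (shear_wave f g P) \<xi>))\<^sup>2 / ((of_int (fst \<xi>))\<^sup>2 + (of_int (snd \<xi>))\<^sup>2)"
    for \<xi>
  have G_eq: "G \<xi> = (if fst \<xi> = 1 then a 1 (snd \<xi>) else 0) + (if fst \<xi> = -1 then a (-1) (snd \<xi>) else 0)" for \<xi>
    unfolding G_def a_def using fourier_coeff_shear_wave[OF f g P, of "fst \<xi>" "snd \<xi>"]
    by (auto simp: norm_divide norm_mult power_divide power_mult_distrib field_simps)
  have a_sum: "(\<Sum>l\<in>L. a \<sigma> l) \<le> (10 + 8 * pi\<^sup>2) * W\<^sup>2 / (16 * pi\<^sup>2)" if "\<bar>\<sigma>\<bar> = 1" "finite L" for \<sigma> L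
    unfolding a_def sum_divide_distrib[symmetric] using that
    by (intro divide_right_mono sum_circle_coeff_weighted_le W continuous_on_wave_profile
        continuous_on_subset[OF f] continuous_on_subset[OF g] continuous_on_subset[OF P]) auto
  have "Hm1_torus_sq (shear_wave f g P) = (\<integral>\<^sup>+\<xi>. ennreal (G \<xi>) \<partial>count_space (UNIV - {(0, 0)}))"
    unfolding Hm1_torus_sq_def G_def ..
  also have "\<dots> \<le> ennreal ((10 + 8 * pi\<^sup>2) * W\<^sup>2 / (8 * pi\<^sup>2))"
  proof (rule nn_integral_count_space_le_finite_sums)
    show "0 \<le> G \<xi>" for \<xi>
      unfolding G_def by simp
    fix F :: "(int \<times> int) set"
    assume F: "finite F" "F \<subseteq> UNIV - {(0, 0)}"
    have reindex: "(\<Sum>\<xi>\<in>F. if fst \<xi> = k then a \<sigma> (snd \<xi>) else 0) = (\<Sum>l\<in>snd ` {\<xi>\<in>F. fst \<xi> = k}. a \<sigma> l)" for k \<sigma>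
    proof -
      have "inj_on snd {\<xi>\<in>F. fst \<xi> = k}"
        by (auto simp: inj_on_def prod_eq_iff)
      then show ?thesis
        using F by (simp add: sum.inter_filter sum.reindex)
    qed
    have "(\<Sum>\<xi>\<in>F. G \<xi>) = (\<Sum>l\<in>snd ` {\<xi>\<in>F. fst \<xi> = 1}. a 1 l) + (\<Sum>l\<in>snd ` {\<xi>\<in>F. fst \<xi> = -1}. a (-1) l)"
      unfolding G_eq sum.distrib reindex ..
    also have "\<dots> \<le> (10 + 8 * pi\<^sup>2) * W\<^sup>2 / (16 * pi\<^sup>2) + (10 + 8 * pi\<^sup>2) * W\<^sup>2 / (16 * pi\<^sup>2)"
      using F by (intro add_mono a_sum) auto
    finally show "(\<Sum>\<xi>\<in>F. G \<xi>) \<le> (10 + 8 * pi\<^sup>2) * W\<^sup>2 / (8 * pi\<^sup>2)"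
      by (simp add: mult.commute)
  qed
  finally show ?thesis .
qed

section \<open>Averaging against a single shear mode\<close>

lemma cos_le_one_minus_square:
  fixes u :: real
  assumes "\<bar>u\<bar> \<le> 1"
  shows "cos u \<le> 1 - 11 / 24 * u\<^sup>2"
proof -
  obtain t where "cos u = (\<Sum>m<4. cos_coeff m * u ^ m) + cos (t + 1 / 2 * real 4 * pi) / fact 4 * u ^ 4"
    using Maclaurin_cos_expansion[of u 4] by blast
  moreover have "(\<Sum>m<4. cos_coeff m * u ^ m) = 1 - u\<^sup>2 / 2"
    by (simp add: lessThan_nat_numeral cos_coeff_def power2_eq_square)
  moreover have "cos (t + 1 / 2 * real 4 * pi) / fact 4 * u ^ 4 \<le> 1 / fact 4 * u ^ 4"
    by (intro mult_right_mono divide_right_mono) auto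
  moreover have "u ^ 4 \<le> u\<^sup>2"
  proof -
    have "u\<^sup>2 \<le> 1"
      using assms by (simp add: abs_square_le_1)
    then show ?thesis
      by (metis power2_eq_square mult_left_le zero_le_power2 power_add numeral_Bit0 one_add_one)
  qed
  ultimately show ?thesis
    by (simp add: fact_numeral)
qed

lemma norm_cis_diff_le: "cmod (cis a - cis b) \<le> \<bar>a - b\<bar>"
proof -
  define u where "u = a - b"
  have "cis a - cis b = cis b * (cis u - 1)"
    unfolding u_def by (simp add: cis_mult algebra_simps)
  then have "cmod (cis a - cis b) = cmod (cis u - 1)"
    by (simp add: norm_mult)
  moreover have "(cmod (cis u - 1))\<^sup>2 = 2 - 2 * cos u"
    unfolding cmod_power2 by (simp add: power2_eq_square algebra_simps sin_squared_eq)
  moreover have "2 - 2 * cos u = 4 * (sin (u / 2))\<^sup>2"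
    using cos_double_sin[of "u / 2"] by simp
  moreover have "(sin (u / 2))\<^sup>2 \<le> (u / 2)\<^sup>2"
    using abs_sin_x_le_abs_x[of "u / 2"] abs_le_square_iff by blast
  ultimately have "(cmod (cis a - cis b))\<^sup>2 \<le> u\<^sup>2"
    by (simp add: power_divide)
  then show ?thesis
    unfolding u_def by (metis abs_le_square_iff abs_norm_cancel)
qed

lemma integral_sin_square_period:
  assumes N: "0 < N"
  shows "integral {0..2 * pi / real N} (\<lambda>s. (sin (real N * s))\<^sup>2) = pi / real N"
proof -
  define F where "F s = s / 2 - sin (2 * real N * s) / (4 * real N)" for s
  have "((\<lambda>s. (sin (real N * s))\<^sup>2) has_integral (F (2 * pi / real N) - F 0)) {0..2 * pi / real N}"
  proof (rule fundamental_theorem_of_calculus)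
    fix s :: real
    have "(F has_real_derivative (1 / 2 - cos (2 * real N * s) * (2 * real N) / (4 * real N)))
        (at s within {0..2 * pi / real N})"
      unfolding F_def by (auto intro!: derivative_eq_intros)
    moreover have "1 / 2 - cos (2 * real N * s) * (2 * real N) / (4 * real N) = (sin (real N * s))\<^sup>2"
      using N cos_double_sin[of "real N * s"] by (simp add: field_simps)
    ultimately show "(F has_vector_derivative (sin (real N * s))\<^sup>2) (at s within {0..2 * pi / real N})"
      by (simp add: has_real_derivative_iff_has_vector_derivative)
  qed (use N in simp)
  moreover have "sin (2 * real N * (2 * pi / real N)) = 0"
    using N sin_2npi[of 2] by (simp add: mult.commute)
  then have "F (2 * pi / real N) - F 0 = pi / real N"
    unfolding F_def by simp
  ultimately show ?thesis
    by (simp add: integral_unique)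
qed

lemma integral_eq_0_if_antisymmetric:
  fixes g :: "real \<Rightarrow> real"
  assumes "continuous_on UNIV g" and antisym: "\<And>u. g (d - u) = - g u"
  shows "integral {0..d} g = 0"
proof -
  have "integral {0..d} g = integral {-d..0} (\<lambda>x. g (-x))"
    using Henstock_Kurzweil_Integration.integral_reflect_real[of d 0 g] by simp
  also have "\<dots> = integral {-d - (-d)..0 - (-d)} (\<lambda>x. g (-(x + (-d))))"
    by (rule integral_shift_real_ivl[symmetric])
  also have "\<dots> = - integral {0..d} g"
    using antisym by (simp add: integral_neg)
  finally show ?thesis
    by simp
qed

lemma integral_sin_mult_sin_period:
  assumes "0 < N"
  shows "integral {0..2 * pi / real N} (\<lambda>s. sin (c * sin (real N * s))) = 0"
proof (rule integral_eq_0_if_antisymmetric)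
  fix u
  have "sin (real N * (2 * pi / real N - u)) = sin (2 * pi - real N * u)"
    using assms by (simp add: algebra_simps)
  then show "sin (c * sin (real N * (2 * pi / real N - u))) = - sin (c * sin (real N * u))"
    by simp
qed (intro continuous_intros)

lemma integral_cos_mult_sin_period_le:
  assumes N: "0 < N" and c: "\<bar>c\<bar> \<le> 1"
  shows "integral {0..2 * pi / real N} (\<lambda>s. cos (c * sin (real N * s)))
    \<le> (1 - 11 / 48 * c\<^sup>2) * (2 * pi / real N)"
proof -
  define d where "d = 2 * pi / real N"
  have "(\<lambda>s. (sin (real N * s))\<^sup>2) integrable_on {0..d}"
    by (intro integrable_continuous_interval continuous_intros)
  then have "((\<lambda>s. (sin (real N * s))\<^sup>2) has_integral pi / real N) {0..d}"
    using integral_sin_square_period[OF N] unfolding d_def[symmetric] by (metis integrable_integral)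
  moreover have "((\<lambda>s. 1) has_integral d) {0..d}"
    using has_integral_const_real[of "1::real" 0 d] N by (simp add: d_def)
  ultimately have "((\<lambda>s. 1 - 11 / 24 * c\<^sup>2 * (sin (real N * s))\<^sup>2) has_integral d - 11 / 24 * c\<^sup>2 * (pi / real N))
      {0..d}"
    by (intro has_integral_diff has_integral_mult_right)
  moreover have "cos (c * sin (real N * s)) \<le> 1 - 11 / 24 * c\<^sup>2 * (sin (real N * s))\<^sup>2" for s
    using cos_le_one_minus_square[of "c * sin (real N * s)"] c
    by (simp add: abs_mult mult_le_one power_mult_distrib ac_simps)
  moreover have "(\<lambda>s. cos (c * sin (real N * s))) integrable_on {0..d}"
    by (intro integrable_continuous_interval continuous_intros)
  ultimately have "integral {0..d} (\<lambda>s. cos (c * sin (real N * s))) \<le> d - 11 / 24 * c\<^sup>2 * (pi / real N)"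
    by (intro has_integral_le[OF integrable_integral]) auto
  also have "\<dots> = (1 - 11 / 48 * c\<^sup>2) * d"
    using N by (simp add: d_def field_simps)
  finally show ?thesis
    unfolding d_def .
qed

lemma norm_integral_cis_sin_period_le:
  fixes N :: nat and c :: real
  assumes N: "0 < N" and c: "\<bar>c\<bar> \<le> 1"
  shows "cmod (integral {0..2 * pi / real N} (\<lambda>s. cis (c * sin (real N * s))))
    \<le> (1 - 11 / 48 * c\<^sup>2) * (2 * pi / real N)"
proof -
  define B where "B = integral {0..2 * pi / real N} (\<lambda>s. cis (c * sin (real N * s)))"
  have "((\<lambda>s. cis (c * sin (real N * s))) has_integral B) {0..2 * pi / real N}"
    unfolding B_def by (intro integrable_integral integrable_continuous_interval continuous_intros)
  from has_integral_Re[OF this] has_integral_Im[OF this]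
  have Re: "Re B = integral {0..2 * pi / real N} (\<lambda>s. cos (c * sin (real N * s)))"
    and Im: "Im B = integral {0..2 * pi / real N} (\<lambda>s. sin (c * sin (real N * s)))"
    by (simp_all add: integral_unique)
  have "0 \<le> Re B"
    unfolding Re
  proof (rule integral_nonneg)
    fix s
    have "\<bar>c * sin (real N * s)\<bar> \<le> 1"
      using c by (simp add: abs_mult mult_le_one)
    then show "0 \<le> cos (c * sin (real N * s))"
      using pi_ge_two by (intro cos_ge_zero) linarith+
  qed (intro integrable_continuous_interval continuous_intros)
  then show ?thesis
    using cmod_eq_Re[of B] integral_sin_mult_sin_period[OF N] integral_cos_mult_sin_period_le[OF N c]
    unfolding B_def[symmetric] Re Im by simp
qed

lemma integral_cis_sin_shift_period:
  fixes N j :: nat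
  assumes N: "0 < N" "even N"
  defines "d \<equiv> 2 * pi / real N"
  shows "integral {-pi + real j * d..-pi + real j * d + d} (\<lambda>s. cis (c * sin (real N * s)))
    = integral {0..d} (\<lambda>s. cis (c * sin (real N * s)))"
proof -
  define x where "x = -pi + real j * d"
  obtain h where h: "N = 2 * h"
    using N(2) by (auto elim: evenE)
  have "real N * (s + x) = real N * s + 2 * pi * of_int (int j - int h)" for s
    using N unfolding x_def d_def h by (simp add: algebra_simps)
  then have "sin (real N * (s + x)) = sin (real N * s)" for s
    using sin_int_2pin[of "int j - int h"] cos_int_2pin[of "int j - int h"] by (simp add: sin_add)
  then have "integral {x - x..x + d - x} (\<lambda>s. cis (c * sin (real N * (s + x))))
      = integral {0..d} (\<lambda>s. cis (c * sin (real N * s)))"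
    by simp
  then show ?thesis
    unfolding x_def[symmetric] integral_shift_real_ivl[where a=x and b="x + d" and c=x, symmetric] by simp
qed

lemma norm_integral_mult_minus_mean_le:
  fixes F E :: "real \<Rightarrow> complex"
  assumes d: "0 \<le> d" and F: "continuous_on {a..a + d} F" and E: "continuous_on {a..a + d} E"
    and K: "0 \<le> K" "\<And>s. s \<in> {a..a + d} \<Longrightarrow> cmod (F s - F a) \<le> K * (s - a)"
    and E1: "\<And>s. s \<in> {a..a + d} \<Longrightarrow> cmod (E s) \<le> 1" and \<beta>: "cmod \<beta> \<le> 1"
    and mean: "integral {a..a + d} E = \<beta> * d"
  shows "cmod (integral {a..a + d} (\<lambda>s. F s * E s) - \<beta> * integral {a..a + d} F) \<le> 2 * K * d * d"
proof -
  have int: "f integrable_on {a..a + d}" if "continuous_on {a..a + d} f" for f :: "real \<Rightarrow> complex"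
    using that by (rule integrable_continuous_interval)
  have "integral {a..a + d} (\<lambda>s. (F s - F a) * (E s - \<beta>))
      = integral {a..a + d} (\<lambda>s. F s * E s) - \<beta> * integral {a..a + d} F - F a * integral {a..a + d} E
        + F a * \<beta> * d"
  proof -
    have "(\<lambda>s. (F s - F a) * (E s - \<beta>)) = (\<lambda>s. F s * E s - \<beta> * F s - F a * E s + F a * \<beta>)"
      by (auto simp: algebra_simps)
    then show ?thesis
      using d by (simp add: integral_add integral_diff int continuous_intros F E integral_mult_right
          scaleR_conv_of_real mult_ac)
  qed
  also have "\<dots> = integral {a..a + d} (\<lambda>s. F s * E s) - \<beta> * integral {a..a + d} F"
    by (simp add: mean)
  finally have eq: "integral {a..a + d} (\<lambda>s. (F s - F a) * (E s - \<beta>)) = \<dots>" .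
  have "cmod ((F s - F a) * (E s - \<beta>)) \<le> K * d * 2" if "s \<in> {a..a + d}" for s
  proof -
    have "cmod (F s - F a) \<le> K * d"
      using K(2)[OF that] mult_left_mono[of "s - a" d K] that K(1) by auto
    moreover have "cmod (E s - \<beta>) \<le> 2"
      using norm_triangle_ineq4[of "E s" \<beta>] E1[OF that] \<beta> by simp
    ultimately show ?thesis
      unfolding norm_mult using K(1) d by (intro mult_mono) auto
  qed
  then have "cmod (integral {a..a + d} (\<lambda>s. (F s - F a) * (E s - \<beta>))) \<le> K * d * 2 * (a + d - a)"
    using d by (intro integral_bound continuous_intros F E) auto
  then show ?thesis
    unfolding eq by (simp add: mult_ac)
qed

lemma norm_integral_mult_minus_mean_blocks_le:
  fixes F E :: "real \<Rightarrow> complex"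
  assumes d: "0 < d" and F: "continuous_on {a..a + real J * d} F" and E: "continuous_on {a..a + real J * d} E"
    and K: "0 \<le> K"
      "\<And>x y. x \<in> {a..a + real J * d} \<Longrightarrow> y \<in> {a..a + real J * d} \<Longrightarrow> cmod (F x - F y) \<le> K * \<bar>x - y\<bar>"
    and E1: "\<And>s. s \<in> {a..a + real J * d} \<Longrightarrow> cmod (E s) \<le> 1" and \<beta>: "cmod \<beta> \<le> 1"
    and mean: "\<And>j. j < J \<Longrightarrow> integral {a + real j * d..a + real j * d + d} E = \<beta> * d"
  shows "cmod (integral {a..a + real J * d} (\<lambda>s. F s * E s) - \<beta> * integral {a..a + real J * d} F)
    \<le> real J * (2 * K * d * d)"
proof -
  have sub: "{a + real j * d..a + real j * d + d} \<subseteq> {a..a + real J * d}" if "j < J" for j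
  proof -
    have "(real j + 1) * d \<le> real J * d"
      using that d by (intro mult_right_mono) auto
    then show ?thesis
      using d by (auto simp: algebra_simps)
  qed
  have "cmod (integral {a..a + real j * d} (\<lambda>s. F s * E s) - \<beta> * integral {a..a + real j * d} F)
      \<le> real j * (2 * K * d * d)" if "j \<le> J" for j
    using that
  proof (induction j)
    case (Suc j)
    define b where "b = a + real j * d"
    have j: "j < J" and b: "{b..b + d} \<subseteq> {a..a + real J * d}" "{a..b} \<subseteq> {a..a + real J * d}"
      using Suc.prems sub[of j] d by (auto simp: b_def)
    have int: "f integrable_on {a..b + d}" if "continuous_on {a..a + real J * d} f" for f :: "real \<Rightarrow> complex"
      by (rule integrable_continuous_interval, rule continuous_on_subset[OF that]) (use b in auto)
    have split: "integral {a..b + d} f = integral {a..b} f + integral {b..b + d} f"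
      if "continuous_on {a..a + real J * d} f" for f :: "real \<Rightarrow> complex"
      by (rule Henstock_Kurzweil_Integration.integral_combine[symmetric])
         (use d int[OF that] in \<open>auto simp: b_def\<close>)
    have Kb: "cmod (F s - F b) \<le> K * (s - b)" if "s \<in> {b..b + d}" for s
      using K(2)[of s b] b(1) that d by (auto simp: subset_iff)
    have block: "cmod (integral {b..b + d} (\<lambda>s. F s * E s) - \<beta> * integral {b..b + d} F) \<le> 2 * K * d * d"
      using d K(1) \<beta> b(1) mean[OF j, folded b_def]
      by (intro norm_integral_mult_minus_mean_le continuous_on_subset[OF F b(1)]
          continuous_on_subset[OF E b(1)] Kb E1) auto
    have "integral {a..b + d} (\<lambda>s. F s * E s) - \<beta> * integral {a..b + d} F
        = (integral {a..b} (\<lambda>s. F s * E s) - \<beta> * integral {a..b} F)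
          + (integral {b..b + d} (\<lambda>s. F s * E s) - \<beta> * integral {b..b + d} F)"
      using F E unfolding split[OF F] split[OF continuous_on_mult[OF F E]] by (simp add: algebra_simps)
    also have "cmod \<dots> \<le> real j * (2 * K * d * d) + 2 * K * d * d"
      using Suc.IH[folded b_def] Suc.prems block by (intro norm_triangle_le add_mono) auto
    finally show ?case
      by (simp add: b_def algebra_simps)
  qed simp
  then show ?thesis
    by simp
qed

lemma obtain_grid_cell:
  fixes d :: real
  assumes d: "0 < d" and y: "a \<le> y" "y \<le> a + real N * d"
  obtains J where "J \<le> N" "a + real J * d \<le> y" "y \<le> a + real J * d + d"
proof -
  define J where "J = min (nat \<lfloor>(y - a) / d\<rfloor>) N"
  have fl: "real (nat \<lfloor>(y - a) / d\<rfloor>) = of_int \<lfloor>(y - a) / d\<rfloor>"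
    using y d by simp
  have "real J * d \<le> real (nat \<lfloor>(y - a) / d\<rfloor>) * d"
    unfolding J_def using d by (intro mult_right_mono) auto
  also have "\<dots> \<le> y - a"
    using d of_int_floor_le[of "(y - a) / d"] unfolding fl by (simp add: le_divide_eq)
  finally have "a + real J * d \<le> y"
    by simp
  moreover have "y \<le> a + real J * d + d"
  proof (cases "nat \<lfloor>(y - a) / d\<rfloor> \<le> N")
    case True
    then have "J = nat \<lfloor>(y - a) / d\<rfloor>"
      unfolding J_def by simp
    moreover have "(y - a) / d < real (nat \<lfloor>(y - a) / d\<rfloor>) + 1"
      unfolding fl by linarith
    ultimately show ?thesis
      using d by (simp add: divide_less_eq algebra_simps)
  next
    case False
    then show ?thesis
      using y d by (simp add: J_def)
  qed
  ultimately show ?thesis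
    using that[of J] by (simp add: J_def)
qed

lemma norm_integral_mult_cis_sin_grid_le:
  fixes F :: "real \<Rightarrow> complex" and N J :: nat
  assumes N: "0 < N" "even N" and J: "J \<le> N" and c: "\<bar>c\<bar> \<le> 1" and F: "continuous_on {-pi..pi} F"
    and K: "0 \<le> K" "\<And>x y. x \<in> {-pi..pi} \<Longrightarrow> y \<in> {-pi..pi} \<Longrightarrow> cmod (F x - F y) \<le> K * \<bar>x - y\<bar>"
    and A: "cmod (integral {-pi..-pi + real J * (2 * pi / real N)} F) \<le> A"
  shows "cmod (integral {-pi..-pi + real J * (2 * pi / real N)} (\<lambda>s. F s * cis (c * sin (real N * s))))
    \<le> (1 - 11 / 48 * c\<^sup>2) * A + 4 * pi * K * (2 * pi / real N)"
proof -
  define d where "d = 2 * pi / real N"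
  define E where "E = (\<lambda>s. cis (c * sin (real N * s)))"
  define \<beta> where "\<beta> = integral {0..d} E / complex_of_real d"
  define q where "q = 1 - 11 / 48 * c\<^sup>2"
  have d: "0 < d" and sub: "{-pi..-pi + real J * d} \<subseteq> {-pi..pi}"
    using N J mult_right_mono[of "real J" "real N" d] by (auto simp: d_def)
  have q: "0 \<le> q" "q \<le> 1"
    using c abs_square_le_1[of c] by (auto simp: q_def)
  have "cmod (integral {0..d} E) \<le> q * d"
    using norm_integral_cis_sin_period_le[OF N(1) c] by (simp add: E_def d_def q_def)
  then have \<beta>: "cmod \<beta> \<le> q"
    using d by (simp add: \<beta>_def norm_divide pos_divide_le_eq)
  have "cmod (integral {-pi..-pi + real J * d} (\<lambda>s. F s * E s) - \<beta> * integral {-pi..-pi + real J * d} F)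
      \<le> real J * (2 * K * d * d)"
  proof (rule norm_integral_mult_minus_mean_blocks_le[OF d])
    show "integral {-pi + real j * d..-pi + real j * d + d} E = \<beta> * complex_of_real d" for j
      using integral_cis_sin_shift_period[OF N, of j c] d by (simp add: \<beta>_def E_def d_def)
    show "continuous_on {-pi..-pi + real J * d} E"
      unfolding E_def by (intro continuous_intros)
  qed (use K \<beta> q sub in \<open>auto simp: E_def intro: continuous_on_subset[OF F]\<close>)
  also have "\<dots> \<le> 4 * pi * K * d"
    using J K(1) d mult_right_mono[of "real J" "real N" "2 * K * d * d"] N
    by (simp add: d_def mult_ac)
  finally show ?thesis
    using norm_triangle_sub[of "integral {-pi..-pi + real J * d} (\<lambda>s. F s * E s)"
        "\<beta> * integral {-pi..-pi + real J * d} F"]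
      mult_mono[OF \<beta> A[folded d_def] q(1) norm_ge_zero]
    by (simp add: norm_mult E_def q_def d_def)
qed

lemma norm_integral_mult_cis_sin_le:
  fixes F :: "real \<Rightarrow> complex" and N :: nat
  assumes N: "0 < N" "even N" and c: "\<bar>c\<bar> \<le> 1" and F: "continuous_on {-pi..pi} F"
    and M: "\<And>y. y \<in> {-pi..pi} \<Longrightarrow> cmod (F y) \<le> M"
    and K: "0 \<le> K" "\<And>x y. x \<in> {-pi..pi} \<Longrightarrow> y \<in> {-pi..pi} \<Longrightarrow> cmod (F x - F y) \<le> K * \<bar>x - y\<bar>"
    and A: "\<And>y. y \<in> {-pi..pi} \<Longrightarrow> cmod (integral {-pi..y} F) \<le> A"
    and y: "y \<in> {-pi..pi}"
  shows "cmod (integral {-pi..y} (\<lambda>s. F s * cis (c * sin (real N * s))))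
    \<le> (1 - 11 / 48 * c\<^sup>2) * A + (4 * pi * K + M) * (2 * pi / real N)"
proof -
  define d where "d = 2 * pi / real N"
  define G where "G = (\<lambda>s. F s * cis (c * sin (real N * s)))"
  have d: "0 < d"
    using N by (simp add: d_def)
  obtain J where J: "J \<le> N" "-pi + real J * d \<le> y" "y \<le> -pi + real J * d + d"
    using obtain_grid_cell[OF d, of "-pi" y N] y N by (auto simp: d_def)
  define x where "x = -pi + real J * d"
  have x: "x \<in> {-pi..pi}" "x \<le> y" "y \<le> x + d"
    using J y by (auto simp: x_def)
  have G: "continuous_on {-pi..pi} G"
    unfolding G_def by (intro continuous_intros F)
  have head: "cmod (integral {-pi..x} G) \<le> (1 - 11 / 48 * c\<^sup>2) * A + 4 * pi * K * d"
    unfolding G_def x_def d_def using A x(1) J(1)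
    by (intro norm_integral_mult_cis_sin_grid_le[OF N _ c F K]) (auto simp: x_def d_def)
  have "cmod (integral {x..y} G) \<le> M * (y - x)"
    using x y by (intro integral_bound continuous_on_subset[OF G]) (auto simp: G_def norm_mult intro!: M)
  also have "\<dots> \<le> M * d"
    using x M[OF y] by (intro mult_left_mono) (auto intro: order_trans[OF norm_ge_zero])
  finally have tail: "cmod (integral {x..y} G) \<le> M * d" .
  have "integral {-pi..y} G = integral {-pi..x} G + integral {x..y} G"
  proof (rule Henstock_Kurzweil_Integration.integral_combine[symmetric])
    show "G integrable_on {-pi..y}"
      using y by (intro integrable_continuous_interval continuous_on_subset[OF G]) auto
  qed (use x in auto)
  also have "cmod \<dots> \<le> (1 - 11 / 48 * c\<^sup>2) * A + 4 * pi * K * d + M * d"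
    using head tail by (intro norm_triangle_le add_mono) auto
  finally have "cmod (integral {-pi..y} G) \<le> (1 - 11 / 48 * c\<^sup>2) * A + 4 * pi * K * d + M * d" .
  then show ?thesis
    by (simp add: G_def d_def algebra_simps)
qed

section \<open>Exponential mixing\<close>

lemma norm_mult_cis_shear_phase_diff_le:
  assumes \<sigma>: "\<bar>\<sigma>\<bar> = 1"
    and M: "\<And>y. y \<in> {-pi..pi} \<Longrightarrow> cmod (h y) \<le> M"
    and K: "\<And>x y. x \<in> {-pi..pi} \<Longrightarrow> y \<in> {-pi..pi} \<Longrightarrow> cmod (h x - h y) \<le> K * \<bar>x - y\<bar>"
    and x: "x \<in> {-pi..pi}" and y: "y \<in> {-pi..pi}"
  shows "cmod (h x * cis (\<sigma> * shear_phase (real k) x) - h y * cis (\<sigma> * shear_phase (real k) y))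
    \<le> (K + M * real (shear_freq_sum (Suc k))) * \<bar>x - y\<bar>"
proof -
  define \<Phi> where "\<Phi> = shear_phase (real k)"
  have "h x * cis (\<sigma> * \<Phi> x) - h y * cis (\<sigma> * \<Phi> y)
      = (h x - h y) * cis (\<sigma> * \<Phi> x) + h y * (cis (\<sigma> * \<Phi> x) - cis (\<sigma> * \<Phi> y))"
    by (simp add: algebra_simps)
  also have "cmod \<dots> \<le> cmod (h x - h y) + cmod (h y) * \<bar>\<sigma> * \<Phi> x - \<sigma> * \<Phi> y\<bar>"
    by (rule order_trans[OF norm_triangle_ineq]) (auto simp: norm_mult intro!: mult_left_mono norm_cis_diff_le)
  also have "\<bar>\<sigma> * \<Phi> x - \<sigma> * \<Phi> y\<bar> = \<bar>\<Phi> x - \<Phi> y\<bar>"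
    using \<sigma> by (simp add: abs_mult flip: right_diff_distrib)
  also have "cmod (h x - h y) + cmod (h y) * \<bar>\<Phi> x - \<Phi> y\<bar>
      \<le> K * \<bar>x - y\<bar> + M * (real (shear_freq_sum (Suc k)) * \<bar>x - y\<bar>)"
    using K[OF x y] M[OF y] order_trans[OF norm_ge_zero M[OF y]] shear_phase_lipschitz[of k x y]
    unfolding \<Phi>_def
    by (intro add_mono mult_mono) (auto simp del: shear_freq_sum.simps)
  finally show ?thesis
    by (simp add: \<Phi>_def algebra_simps)
qed

lemma mixing_error_le:
  assumes M: "0 \<le> M" and K: "0 \<le> K"
  shows "(4 * pi * (K + M * real (shear_freq_sum (Suc k))) + M) * (2 * pi / real (shear_freq (Suc k)))
    \<le> 2 * pi * (4 * pi * K + (4 * pi + 1) * M) / 2 ^ Suc k"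
proof -
  define S where "S = real (shear_freq_sum (Suc k))"
  have S: "1 \<le> S"
    unfolding S_def using shear_freq_sum_ge_1[of "Suc k"] by linarith
  have "4 * pi * (K + M * S) + M \<le> (4 * pi * K + (4 * pi + 1) * M) * S"
    using S M K mult_left_mono[OF S, of "4 * pi * K"] mult_left_mono[OF S M] by (simp add: algebra_simps)
  then have "(4 * pi * (K + M * S) + M) * (2 * pi / real (shear_freq (Suc k)))
      \<le> (4 * pi * K + (4 * pi + 1) * M) * S * (2 * pi / real (shear_freq (Suc k)))"
    by (intro mult_right_mono) auto
  also have "\<dots> = 2 * pi * (4 * pi * K + (4 * pi + 1) * M) / 2 ^ Suc k"
    using S by (simp add: S_def shear_freq_def field_simps del: shear_freq_sum.simps)
  finally show ?thesis
    unfolding S_def .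
qed

lemma power_four_fifths_le_exp:
  assumes "t - 1 \<le> real m"
  shows "(4 / 5 :: real) ^ m \<le> 5 / 4 * exp (- ln (5 / 4) * t)"
proof -
  have "exp (- ln (5 / 4) * real m) = exp (- ln (5 / 4 :: real)) ^ m"
    by (metis exp_of_nat_mult mult.commute mult_minus_left)
  then have "(4 / 5 :: real) ^ m = exp (- ln (5 / 4) * real m)"
    by (simp add: exp_minus)
  also have "\<dots> \<le> exp (ln (5 / 4) - ln (5 / 4) * t)"
    using mult_left_mono[OF assms, of "ln (5 / 4)"] by (simp add: algebra_simps)
  also have "\<dots> = 5 / 4 * exp (- ln (5 / 4) * t)"
    by (simp add: exp_diff exp_minus field_simps)
  finally show ?thesis .
qed

lemma norm_integral_mult_cis_shear_phase_step_le:
  fixes h :: "real \<Rightarrow> complex"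
  assumes \<sigma>: "\<bar>\<sigma>\<bar> = 1" and h: "continuous_on {-pi..pi} h" and M0: "0 \<le> M" and K0: "0 \<le> K"
    and M: "\<And>y. y \<in> {-pi..pi} \<Longrightarrow> cmod (h y) \<le> M"
    and K: "\<And>x y. x \<in> {-pi..pi} \<Longrightarrow> y \<in> {-pi..pi} \<Longrightarrow> cmod (h x - h y) \<le> K * \<bar>x - y\<bar>"
    and \<theta>: "0 \<le> \<theta>" "\<theta> \<le> 1"
    and A: "\<And>y. y \<in> {-pi..pi} \<Longrightarrow> cmod (integral {-pi..y} (\<lambda>s. h s * cis (\<sigma> * shear_phase (real k) s))) \<le> A"
    and y: "y \<in> {-pi..pi}"
  defines "D \<equiv> 2 * pi * (4 * pi * K + (4 * pi + 1) * M)"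
  shows "cmod (integral {-pi..y} (\<lambda>s. h s * cis (\<sigma> * shear_phase (real k + \<theta>) s)))
    \<le> (1 - 11 / 48 * \<theta>\<^sup>2) * A + D / 2 ^ Suc k"
proof -
  define F where "F = (\<lambda>s. h s * cis (\<sigma> * shear_phase (real k) s))"
  have "(\<lambda>s. h s * cis (\<sigma> * shear_phase (real k + \<theta>) s))
      = (\<lambda>s. F s * cis (\<sigma> * \<theta> * sin (real (shear_freq (Suc k)) * s)))"
    using shear_phase_add[OF \<theta>, of k] by (simp add: fun_eq_iff F_def cis_mult algebra_simps)
  then have "cmod (integral {-pi..y} (\<lambda>s. h s * cis (\<sigma> * shear_phase (real k + \<theta>) s)))
      = cmod (integral {-pi..y} (\<lambda>s. F s * cis (\<sigma> * \<theta> * sin (real (shear_freq (Suc k)) * s))))"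
    by simp
  also have "\<dots> \<le> (1 - 11 / 48 * (\<sigma> * \<theta>)\<^sup>2) * A
      + (4 * pi * (K + M * real (shear_freq_sum (Suc k))) + M) * (2 * pi / real (shear_freq (Suc k)))"
  proof (rule norm_integral_mult_cis_sin_le[OF shear_freq_pos even_shear_freq_Suc])
    show "continuous_on {-pi..pi} F"
      unfolding F_def by (intro continuous_intros h continuous_on_shear_phase)
    show "cmod (F y) \<le> M" if "y \<in> {-pi..pi}" for y
      using M[OF that] by (simp add: F_def norm_mult)
    show "cmod (F x - F y) \<le> (K + M * real (shear_freq_sum (Suc k))) * \<bar>x - y\<bar>"
      if "x \<in> {-pi..pi}" "y \<in> {-pi..pi}" for x y
      unfolding F_def by (rule norm_mult_cis_shear_phase_diff_le[OF \<sigma> M K that])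
  qed (use \<sigma> \<theta> M0 K0 A y in \<open>auto simp: F_def abs_mult mult_le_one\<close>)
  also have "\<dots> \<le> (1 - 11 / 48 * \<theta>\<^sup>2) * A + D / 2 ^ Suc k"
  proof -
    have "\<sigma>\<^sup>2 = 1"
      using \<sigma> by (simp add: abs_square_eq_1)
    then show ?thesis
      using mixing_error_le[OF M0 K0, of k] by (simp add: D_def power_mult_distrib)
  qed
  finally show ?thesis .
qed

lemma norm_integral_mult_cis_shear_phase_nat_le:
  fixes h :: "real \<Rightarrow> complex"
  assumes \<sigma>: "\<bar>\<sigma>\<bar> = 1" and h: "continuous_on {-pi..pi} h" and M0: "0 \<le> M" and K0: "0 \<le> K"
    and M: "\<And>y. y \<in> {-pi..pi} \<Longrightarrow> cmod (h y) \<le> M"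
    and K: "\<And>x y. x \<in> {-pi..pi} \<Longrightarrow> y \<in> {-pi..pi} \<Longrightarrow> cmod (h x - h y) \<le> K * \<bar>x - y\<bar>"
    and y: "y \<in> {-pi..pi}"
  defines "D \<equiv> 2 * pi * (4 * pi * K + (4 * pi + 1) * M)"
  shows "cmod (integral {-pi..y} (\<lambda>s. h s * cis (\<sigma> * shear_phase (real k) s)))
    \<le> (2 * pi * M + 18 * D) * (4 / 5) ^ k"
  using y
proof (induction k arbitrary: y)
  case 0
  have "0 \<le> D"
    using M0 K0 by (simp add: D_def)
  then have "M * (y + pi) \<le> 2 * pi * M + 18 * D"
    using 0 M0 mult_left_mono[of "y + pi" "2 * pi" M] by (simp add: mult.commute)
  moreover have "cmod (integral {-pi..y} h) \<le> M * (y - -pi)"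
    using 0 by (intro integral_bound continuous_on_subset[OF h] M) auto
  ultimately show ?case
    by (simp add: shear_phase_def)
next
  case (Suc k)
  define B where "B = 2 * pi * M + 18 * D"
  define X where "X = (4 / 5 :: real) ^ k"
  have "cmod (integral {-pi..y} (\<lambda>s. h s * cis (\<sigma> * shear_phase (real (Suc k)) s)))
      \<le> 37 / 48 * (B * X) + D / 2 ^ Suc k"
    using norm_integral_mult_cis_shear_phase_step_le[where \<theta>=1,
        OF \<sigma> h M0 K0 M K zero_le_one order_refl Suc.IH Suc.prems]
    by (simp add: B_def X_def D_def add.commute)
  moreover have "D / 2 ^ Suc k \<le> 1 / 2 * (D * X)"
  proof -
    have "(1 / 2 :: real) ^ k \<le> X"
      unfolding X_def by (intro power_mono) auto
    then show ?thesis
      using M0 K0 mult_left_mono[of "(1 / 2) ^ k" X "D / 2"] by (simp add: D_def power_one_over)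
  qed
  moreover have "0 \<le> 7 * pi / 120 * (M * X)" "0 \<le> D * X"
    using M0 K0 by (simp_all add: X_def D_def)
  \<comment> \<open>The contraction factor is 37/48 = 4/5 - 7/240, and the margin 7/240 * 18 D exceeds D / 2.\<close>
  moreover have "B * (4 / 5) ^ Suc k - 37 / 48 * (B * X) = 7 * pi / 120 * (M * X) + 21 / 40 * (D * X)"
    by (simp add: B_def X_def algebra_simps)
  ultimately show ?case
    unfolding B_def by linarith
qed

lemma norm_integral_mult_cis_shear_phase_le:
  fixes h :: "real \<Rightarrow> complex"
  assumes \<sigma>: "\<bar>\<sigma>\<bar> = 1" and h: "continuous_on {-pi..pi} h" and M0: "0 \<le> M" and K0: "0 \<le> K"
    and M: "\<And>y. y \<in> {-pi..pi} \<Longrightarrow> cmod (h y) \<le> M"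
    and K: "\<And>x y. x \<in> {-pi..pi} \<Longrightarrow> y \<in> {-pi..pi} \<Longrightarrow> cmod (h x - h y) \<le> K * \<bar>x - y\<bar>"
    and t: "0 \<le> t" and y: "y \<in> {-pi..pi}"
  defines "D \<equiv> 2 * pi * (4 * pi * K + (4 * pi + 1) * M)"
  shows "cmod (integral {-pi..y} (\<lambda>s. h s * cis (\<sigma> * shear_phase t s)))
    \<le> 5 / 2 * (2 * pi * M + 18 * D) * exp (- ln (5 / 4) * t)"
proof -
  define m where "m = nat \<lfloor>t\<rfloor>"
  define B where "B = 2 * pi * M + 18 * D"
  have D0: "0 \<le> D" and DB: "D \<le> B"
    using M0 K0 by (simp_all add: D_def B_def)
  have tm: "t = real m + frac t" "t - 1 \<le> real m"
    using t by (simp_all add: m_def frac_def)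
  have \<theta>: "0 \<le> frac t" "frac t \<le> 1"
    using frac_lt_1[of t] by (simp_all add: frac_ge_0)
  have "real m + frac t = t"
    using tm(1) by simp
  note step = norm_integral_mult_cis_shear_phase_step_le[where k=m, OF \<sigma> h M0 K0 M K \<theta>
      norm_integral_mult_cis_shear_phase_nat_le[OF \<sigma> h M0 K0 M K] y, unfolded this]
  have "cmod (integral {-pi..y} (\<lambda>s. h s * cis (\<sigma> * shear_phase t s)))
      \<le> (1 - 11 / 48 * (frac t)\<^sup>2) * (B * (4 / 5) ^ m) + D / 2 ^ Suc m"
    using step by (simp add: B_def D_def)
  also have "\<dots> \<le> B * (4 / 5) ^ m + D * (4 / 5) ^ m"
  proof (rule add_mono)
    show "(1 - 11 / 48 * (frac t)\<^sup>2) * (B * (4 / 5) ^ m) \<le> B * (4 / 5) ^ m"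
      using DB D0 power_le_one[OF \<theta>, of 2] by (intro mult_left_le_one_le) auto
    have "(1 / 2 :: real) ^ m \<le> (4 / 5) ^ m"
      by (intro power_mono) auto
    then have "D / 2 ^ m \<le> D * (4 / 5) ^ m"
      using D0 mult_left_mono[of "(1 / 2) ^ m" "(4 / 5) ^ m" D] by (simp add: power_one_over)
    moreover have "D / 2 ^ Suc m \<le> D / 2 ^ m"
      using D0 by (simp add: divide_left_mono)
    ultimately show "D / 2 ^ Suc m \<le> D * (4 / 5) ^ m"
      by linarith
  qed
  also have "\<dots> \<le> 2 * B * (5 / 4 * exp (- ln (5 / 4) * t))"
    unfolding distrib_right[symmetric] using power_four_fifths_le_exp[OF tm(2)]
    by (rule order_trans[OF mult_left_mono mult_right_mono]) (use DB D0 in auto)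
  also have "\<dots> = 5 / 2 * (2 * pi * M + 18 * D) * exp (- ln (5 / 4) * t)"
    by (simp add: B_def)
  finally show ?thesis .
qed

lemma norm_integral_wave_profile_shear_phase_le:
  assumes f: "smooth_fun f" and g: "smooth_fun g" and M0: "0 \<le> M"
    and M: "\<And>y. y \<in> {-pi..pi} \<Longrightarrow> \<bar>f y\<bar> \<le> M \<and> \<bar>g y\<bar> \<le> M \<and> \<bar>deriv f y\<bar> \<le> M \<and> \<bar>deriv g y\<bar> \<le> M"
    and \<sigma>: "\<bar>\<sigma>\<bar> = 1" and t: "0 \<le> t" and y: "y \<in> {-pi..pi}"
  defines "D \<equiv> 2 * pi * (4 * pi * (2 * M) + (4 * pi + 1) * (2 * M))"
  shows "cmod (integral {-pi..y} (wave_profile f g (shear_phase t) \<sigma>))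
    \<le> 5 / 2 * (2 * pi * (2 * M) + 18 * D) * exp (- ln (5 / 4) * t)"
proof -
  define h where "h y = Complex (g y) (- \<sigma> * f y)" for y
  have hK: "cmod (h x - h y) \<le> 2 * M * \<bar>x - y\<bar>" if "x \<in> {-pi..pi}" "y \<in> {-pi..pi}" for x y
    using cmod_le[of "h x - h y"] smooth_fun_lipschitz[OF f _ that, of M]
      smooth_fun_lipschitz[OF g _ that, of M] M \<sigma>
    by (auto simp: h_def abs_mult simp flip: right_diff_distrib)
  have hM: "cmod (h y) \<le> 2 * M" if "y \<in> {-pi..pi}" for y
    using cmod_le[of "h y"] M[OF that] \<sigma> by (simp add: h_def abs_mult)
  have hc: "continuous_on {-pi..pi} h"
    unfolding h_def Complex_eq using smooth_fun_continuous_on f g by (intro continuous_intros) auto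
  have "wave_profile f g (shear_phase t) \<sigma> = (\<lambda>s. h s * cis (- \<sigma> * shear_phase t s))"
    by (simp add: fun_eq_iff wave_profile_def h_def)
  then show ?thesis
    unfolding D_def using norm_integral_mult_cis_shear_phase_le[of "- \<sigma>", OF _ hc _ _ hM hK t y] M0 \<sigma> by simp
qed

lemma Hm1_torus_sq_shear_wave_shear_phase_decay:
  assumes f: "smooth_fun f" and g: "smooth_fun g"
  obtains C where "0 < C"
    "\<And>t. 0 \<le> t \<Longrightarrow> Hm1_torus_sq (shear_wave f g (shear_phase t)) \<le> ennreal ((C * exp (- ln (5 / 4) * t))\<^sup>2)"
proof -
  obtain M where M0: "0 < M"
    and M: "\<And>y. y \<in> {-pi..pi} \<Longrightarrow> \<bar>f y\<bar> \<le> M \<and> \<bar>g y\<bar> \<le> M \<and> \<bar>deriv f y\<bar> \<le> M \<and> \<bar>deriv g y\<bar> \<le> M"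
    using smooth_funs_bounded[OF f g] by blast
  define B where "B = 5 / 2 * (2 * pi * (2 * M) + 18 * (2 * pi * (4 * pi * (2 * M) + (4 * pi + 1) * (2 * M))))"
  define C where "C = B * sqrt ((10 + 8 * pi\<^sup>2) / (8 * pi\<^sup>2))"
  have "0 < B"
    using M0 by (simp add: B_def add_pos_pos)
  then have "0 < C"
    by (simp add: C_def add_pos_nonneg)
  moreover have "Hm1_torus_sq (shear_wave f g (shear_phase t)) \<le> ennreal ((C * exp (- ln (5 / 4) * t))\<^sup>2)"
    if t: "0 \<le> t" for t
  proof -
    have "Hm1_torus_sq (shear_wave f g (shear_phase t))
        \<le> ennreal ((10 + 8 * pi\<^sup>2) * (B * exp (- ln (5 / 4) * t))\<^sup>2 / (8 * pi\<^sup>2))"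
      using smooth_fun_continuous_on f g M0 M t unfolding B_def
      by (intro Hm1_torus_sq_shear_wave_le continuous_on_shear_phase norm_integral_wave_profile_shear_phase_le)
        auto
    also have "(10 + 8 * pi\<^sup>2) * (B * exp (- ln (5 / 4) * t))\<^sup>2 / (8 * pi\<^sup>2) = (C * exp (- ln (5 / 4) * t))\<^sup>2"
      by (simp add: C_def power_mult_distrib add_pos_nonneg)
    finally show ?thesis .
  qed
  ultimately show ?thesis
    using that by blast
qed

theorem theorem3p1:
  fixes f0 g0 :: "real \<Rightarrow> real"
  assumes "smooth_fun f0" and "smooth_fun g0"
    and "periodic_2pi f0" and "periodic_2pi g0"
  shows "\<exists>C0 C1 C2 \<beta>1 \<beta>2 \<beta>3 :: real. C0 > 0 \<and> C1 > 0 \<and> C2 > 0 \<and>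
           \<beta>1 > 0 \<and> \<beta>2 > 0 \<and> \<beta>3 > 0 \<and>
         (\<exists>U :: real \<Rightarrow> real \<Rightarrow> real.
            (\<lambda>p. U (fst p) (snd p)) \<in> borel_measurable borel \<and>
            (\<forall>t. smooth_fun (U t) \<and> periodic_2pi (U t)) \<and>
            (\<forall>t y. \<bar>U t y\<bar> \<le> 1) \<and>
            (\<forall>t\<ge>0. H1_circle_sq (U t) \<le> ennreal ((C0 * exp (\<beta>1 * (of_int \<lceil>t\<rceil>)\<^sup>2))\<^sup>2)) \<and>
            (let \<rho> = transport_sol U (\<lambda>x y. f0 y * sin x + g0 y * cos x) in
              \<forall>t\<ge>0.
                (\<forall>x y. (\<lambda>y'. \<rho> t x y') differentiable (at y)) \<and>
                Hm1_torus_sq (\<rho> t) \<le> ennreal ((C1 * exp (- \<beta>2 * t))\<^sup>2) \<and>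
                H1_torus_sq (\<rho> t) \<le> ennreal ((C2 * exp (\<beta>3 * (of_int \<lceil>t\<rceil>)\<^sup>2))\<^sup>2)))"
proof -
  obtain C1 where C1: "0 < C1"
    "\<And>t. 0 \<le> t \<Longrightarrow> Hm1_torus_sq (shear_wave f0 g0 (shear_phase t)) \<le> ennreal ((C1 * exp (- ln (5 / 4) * t))\<^sup>2)"
    using Hm1_torus_sq_shear_wave_shear_phase_decay[OF assms(1,2)] by blast
  obtain C2 where C2: "0 < C2"
    "\<And>t. 0 \<le> t \<Longrightarrow> H1_torus_sq (shear_wave f0 g0 (shear_phase t)) \<le> ennreal ((C2 * exp (2 * (of_int \<lceil>t\<rceil>)\<^sup>2))\<^sup>2)"
    using H1_torus_sq_shear_wave_shear_phase_le[OF assms(1,2)] by blast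
  have differentiable: "(\<lambda>y. shear_wave f0 g0 (shear_phase t) x y) differentiable (at y)" for t x y
    using shear_wave_has_real_derivative_y[OF _ _ shear_phase_differentiable]
      smooth_fun_has_real_derivative[OF assms(1)] smooth_fun_has_real_derivative[OF assms(2)]
    by (meson real_differentiable_def)
  show ?thesis
    by (rule exI[of _ "sqrt (2 * pi * (1 + exp 4))"], rule exI[of _ C1], rule exI[of _ C2], rule exI[of _ 2],
        rule exI[of _ "ln (5 / 4)"], rule exI[of _ 2], intro conjI exI[of _ shear_velocity])
      (use C1 C2 differentiable in \<open>auto simp: Let_def transport_sol_shear_velocity
        smooth_fun_shear_velocity periodic_2pi_shear_velocity abs_shear_velocity_le
        H1_circle_sq_shear_velocity_le shear_velocity_measurable add_pos_pos\<close>)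
qed

end
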